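(* Let $W_T=S_{N+1}$ with simple reflections $s_1,\dots,s_N$, $T=\{1,\dots,N\}$, $I=\{1,\dots,N-1\}$, and let $X=\{m+1,\dots,N\}$ be a suffix of $T$ ($0\le m\le N$; $X=\emptyset$ when $m=N$), with $h_X=s_Ns_{N-1}\cdots s_{m+1}$. (a) If $X\neq\emptyset$ and $m\ge1$ (so $s_m$ "grows" the suffix), then $b_{w_Ih_X}b_{s_m}=b_{w_Ih_{X\cup\{m\}}}+b_{w_Ih_{X\setminus\{m+1\}}}$. (b) If $X=\emptyset$, then $b_{w_I}b_{s_N}=b_{w_Is_N}$. (c) In all other cases, i.e. for $j\in T$ with $j\neq m$ when $X\ne\emptyset$ and $j\neq N$ when $X=\emptyset$, $b_{w_Ih_X}b_{s_j}=(v+v^{-1})b_{w_Ih_X}$. In particular, $w_Ih_X$ is smooth whenever $X$ is a suffix of $T$.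
   Context: $w_I$ is the longest element of the parabolic subgroup generated by $s_1,\dots,s_{N-1}$; for a suffix $Y=\{a,\dots,N\}$, $h_Y=s_Ns_{N-1}\cdots s_a$ (and $h_\emptyset=1$). $\mathbf H$ is the Hecke algebra of $S_{N+1}$ over $\mathbb Z[v,v^{-1}]$ with standard basis $H_y$ and Kazhdan–Lusztig basis $b_y$ ($b_s=H_s+v$). An element $w$ is smooth if $b_w=\sum_{y\le w}v^{\ell(w)-\ell(y)}H_y$. *)

theory Defs
  imports "HOL-Computational_Algebra.Formal_Laurent_Series" "HOL-Combinatorics.Permutations"
begin

(* Weyl group W_T = S_(N+1): permutations of {1..N+1}; product x y := x \<circ> y.
   Simple reflection s_i (1 \<le> i \<le> N) swaps i and i+1. *)
type_synonym perm = "nat \<Rightarrow> nat"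

definition Wgrp :: "nat \<Rightarrow> perm set" where
  "Wgrp N = {w. w permutes {1..Suc N}}"

definition sref :: "nat \<Rightarrow> perm" where
  "sref i = Transposition.transpose i (Suc i)"

definition len :: "nat \<Rightarrow> perm \<Rightarrow> nat" where
  "len N w = card {(i, j). 1 \<le> i \<and> i < j \<and> j \<le> Suc N \<and> w j < w i}"

definition wordprod :: "nat list \<Rightarrow> perm" where
  "wordprod is = foldr (\<circ>) (map sref is) id"

definition rword :: "nat \<Rightarrow> perm \<Rightarrow> nat list" where
  "rword N y = (SOME is. set is \<subseteq> {1..N} \<and> wordprod is = y \<and> length is = len N y)"

definition bruhat_le :: "nat \<Rightarrow> perm \<Rightarrow> perm \<Rightarrow> bool" where
  "bruhat_le N x w \<longleftrightarrow> x \<in> Wgrp N \<and>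
     (x, w) \<in> {(y, y \<circ> Transposition.transpose i j) | y i j.
                 y \<in> Wgrp N \<and> 1 \<le> i \<and> i < j \<and> j \<le> Suc N \<and>
                 len N y < len N (y \<circ> Transposition.transpose i j)}\<^sup>*"

definition parab :: "nat \<Rightarrow> perm set" where
  "parab N = {wordprod is | is. set is \<subseteq> {1..N-1}}"

definition wI :: "nat \<Rightarrow> perm" where
  "wI N = (THE w. w \<in> parab N \<and> (\<forall>u\<in>parab N. len N u \<le> len N w))"

(* h_X for the suffix X = {m+1..N}: s_N s_(N-1) ... s_(m+1) *)
definition hsuf :: "nat \<Rightarrow> nat \<Rightarrow> perm" where
  "hsuf N m = wordprod (rev [Suc m..<Suc N])"

(* Laurent polynomials Z[v,v^-1] inside integer formal Laurent series; v = fls_X *)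
definition lpoly :: "int fls \<Rightarrow> bool" where
  "lpoly p \<longleftrightarrow> finite {n. fls_nth p n \<noteq> 0}"

definition vZv :: "int fls \<Rightarrow> bool" where
  "vZv p \<longleftrightarrow> lpoly p \<and> (\<forall>n\<le>0. fls_nth p n = 0)"

definition lbar :: "int fls \<Rightarrow> int fls" where
  "lbar p = Abs_fls (\<lambda>n. if lpoly p then fls_nth p (- n) else 0)"

(* Hecke algebra elements: coefficient functions  \<Sum>_x h(x) H_x  (supported on Wgrp N) *)
type_synonym hecke = "perm \<Rightarrow> int fls"

definition Hstd :: "perm \<Rightarrow> hecke" where
  "Hstd y = (\<lambda>x. if x = y then 1 else 0)"

definition hadd :: "hecke \<Rightarrow> hecke \<Rightarrow> hecke" where
  "hadd f g = (\<lambda>x. f x + g x)"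

definition hscale :: "int fls \<Rightarrow> hecke \<Rightarrow> hecke" where
  "hscale p f = (\<lambda>x. p * f x)"

(* right multiplication by H_(s_i):  H_x H_s = H_(xs) if xs > x,
   H_x H_s = H_(xs) + (v^-1 - v) H_x if xs < x *)
definition mult_Hs :: "nat \<Rightarrow> hecke \<Rightarrow> nat \<Rightarrow> hecke" where
  "mult_Hs N h i = (\<lambda>z. h (z \<circ> sref i) +
      (if len N (z \<circ> sref i) < len N z then (fls_X_inv - fls_X) * h z else 0))"

definition mult_H :: "nat \<Rightarrow> hecke \<Rightarrow> perm \<Rightarrow> hecke" where
  "mult_H N h y = fold (\<lambda>i g. mult_Hs N g i) (rword N y) h"

definition hmult :: "nat \<Rightarrow> hecke \<Rightarrow> hecke \<Rightarrow> hecke" where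
  "hmult N h g = (\<lambda>z. \<Sum>y\<in>Wgrp N. mult_H N (hscale (g y) h) y z)"

(* bar(H_x) = H_(s_i1)^-1 ... H_(s_ik)^-1 with H_s^-1 = H_s + (v - v^-1) *)
definition barH :: "nat \<Rightarrow> perm \<Rightarrow> hecke" where
  "barH N x = fold (\<lambda>i g. hadd (mult_Hs N g i) (hscale (fls_X - fls_X_inv) g))
                   (rword N x) (Hstd id)"

definition hbar :: "nat \<Rightarrow> hecke \<Rightarrow> hecke" where
  "hbar N h = (\<lambda>z. \<Sum>x\<in>Wgrp N. lbar (h x) * barH N x z)"

definition kl :: "nat \<Rightarrow> perm \<Rightarrow> hecke" where
  "kl N w = (THE b. (\<forall>x. x \<notin> Wgrp N \<longrightarrow> b x = 0) \<and> (\<forall>x. lpoly (b x)) \<and>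
                    hbar N b = b \<and> b w = 1 \<and> (\<forall>x. x \<noteq> w \<longrightarrow> vZv (b x)))"

definition smooth :: "nat \<Rightarrow> perm \<Rightarrow> bool" where
  "smooth N w \<longleftrightarrow>
     kl N w = (\<lambda>y. if bruhat_le N y w then fls_X ^ (len N w - len N y) else 0)"

end

theory Submission
  imports Defs
begin

text \<open>In one-line notation \<open>w\<^sub>I h\<^sub>X\<close> is \<open>[N, ..., N+1-m, N+1, N-m, ..., 1]\<close>, and \<open>y\<close> lies
  below it in the Bruhat order exactly when \<open>N+1\<close> is not among \<open>y 1, ..., y m\<close>. Hence the candidate
  \<open>C(m) = \<Sum> v^(l(w\<^sub>I h\<^sub>X) - l(y)) H\<^sub>y\<close>, summed over this interval, is explicit, and
  comparing coefficients gives \<open>C(m) b(s\<^sub>m) = C(m-1) + C(m+1)\<close> and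
  \<open>C(m) b(s\<^sub>j) = (v + v\<^sup>-\<^sup>1) C(m)\<close> for \<open>j \<noteq> m\<close>. As \<open>b(s)\<close> is bar invariant, the first
  identity passes bar invariance from \<open>C(m)\<close> and \<open>C(m+1)\<close> on to \<open>C(m-1)\<close>; the descent starts
  from \<open>C(N+1) = 0\<close> and \<open>C(N)\<close>, the same sum for the longest element of \<open>S\<^sub>N\<close>, which is
  covered by induction on the rank. The off-diagonal coefficients of \<open>C(m)\<close> lie in \<open>v\<int>[v]\<close>,
  so \<open>C(m) = b(w\<^sub>I h\<^sub>X)\<close>: this is smoothness, and the two identities become the
  multiplication formulas.\<close>

section \<open>Length and reduced words\<close>

definition inversions :: "nat \<Rightarrow> perm \<Rightarrow> (nat \<times> nat) set" where
  "inversions N y = {(i, j). 1 \<le> i \<and> i < j \<and> j \<le> Suc N \<and> y j < y i}"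

lemma len_eq_card_inversions: "len N y = card (inversions N y)"
  by (simp add: len_def inversions_def)

lemma inversions_subset: "inversions N y \<subseteq> {1..Suc N} \<times> {1..Suc N}"
  by (auto simp: inversions_def)

lemma finite_inversions: "finite (inversions N y)"
  using inversions_subset by (rule finite_subset) auto

lemma len_le_square: "len N y \<le> Suc N * Suc N"
proof -
  have "card (inversions N y) \<le> card ({1..Suc N} \<times> {1..Suc N})"
    using inversions_subset by (rule card_mono[rotated]) simp
  then show ?thesis by (simp add: len_eq_card_inversions card_cartesian_product)
qed

lemma len_id [simp]: "len N id = 0"
proof -
  have "inversions N id = {}" by (auto simp: inversions_def)
  then show ?thesis by (simp add: len_eq_card_inversions)
qed

lemma Wgrp_inj: "x \<in> Wgrp N \<Longrightarrow> inj x"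
  by (simp add: Wgrp_def permutes_inj)

lemma Wgrp_apply_in: "x \<in> Wgrp N \<Longrightarrow> a \<in> {1..Suc N} \<Longrightarrow> x a \<in> {1..Suc N}"
  by (metis Wgrp_def mem_Collect_eq permutes_in_image)

lemma Wgrp_apply_outside: "x \<in> Wgrp N \<Longrightarrow> a \<notin> {1..Suc N} \<Longrightarrow> x a = a"
  by (simp add: Wgrp_def permutes_not_in)

lemma Wgrp_preimage:
  assumes "x \<in> Wgrp N" "b \<in> {1..Suc N}"
  obtains a where "a \<in> {1..Suc N}" "x a = b"
  using assms by (metis Wgrp_def mem_Collect_eq permutes_image image_iff)

lemma id_in_Wgrp: "id \<in> Wgrp N"
  by (simp add: Wgrp_def permutes_id)

lemma Wgrp_comp: "x \<in> Wgrp N \<Longrightarrow> y \<in> Wgrp N \<Longrightarrow> x \<circ> y \<in> Wgrp N"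
  unfolding Wgrp_def by (auto intro: permutes_compose)

lemma finite_Wgrp: "finite (Wgrp N)"
  unfolding Wgrp_def by (rule finite_permutations) simp

lemma transpose_in_Wgrp:
  "i \<in> {1..Suc N} \<Longrightarrow> j \<in> {1..Suc N} \<Longrightarrow> Transposition.transpose i j \<in> Wgrp N"
  unfolding Wgrp_def by (auto intro!: permutes_swap_id)

lemma sref_apply: "sref i a = (if a = i then Suc i else if a = Suc i then i else a)"
  by (simp add: sref_def Transposition.transpose_def)

lemma sref_sref [simp]: "sref i (sref i a) = a"
  by (simp add: sref_apply)

lemma comp_sref_sref [simp]: "y \<circ> sref i \<circ> sref i = y"
  by (rule ext) simp

lemma sref_sref_comp [simp]: "sref i \<circ> (sref i \<circ> y) = y"
  by (rule ext) simp

lemma comp_sref_eq_iff: "z \<circ> sref i = x \<longleftrightarrow> z = x \<circ> sref i"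
  by (metis comp_sref_sref)

lemma sref_comp_eq_iff: "sref i \<circ> z = x \<longleftrightarrow> z = sref i \<circ> x"
  by (metis sref_sref_comp)

lemma sref_ne_id: "sref j \<noteq> id"
  by (metis id_apply n_not_Suc_n sref_apply)

lemma sref_in_Wgrp: "1 \<le> i \<Longrightarrow> i \<le> N \<Longrightarrow> sref i \<in> Wgrp N"
  by (simp add: sref_def transpose_in_Wgrp)

lemma comp_sref_in_Wgrp_iff: "1 \<le> i \<Longrightarrow> i \<le> N \<Longrightarrow> x \<circ> sref i \<in> Wgrp N \<longleftrightarrow> x \<in> Wgrp N"
  by (metis Wgrp_comp sref_in_Wgrp comp_sref_sref)

lemma sref_comp_in_Wgrp_iff: "1 \<le> i \<Longrightarrow> i \<le> N \<Longrightarrow> sref i \<circ> x \<in> Wgrp N \<longleftrightarrow> x \<in> Wgrp N"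
  by (metis Wgrp_comp sref_in_Wgrp sref_sref_comp)

lemma sref_less_sref_iff:
  "\<not> (a = j \<and> b = Suc j) \<Longrightarrow> \<not> (a = Suc j \<and> b = j) \<Longrightarrow> sref j a < sref j b \<longleftrightarrow> a < b"
  by (auto simp: sref_apply)

lemma len_comp_sref_ascent:
  assumes "1 \<le> i" "i \<le> N" "y i < y (Suc i)"
  shows "len N (y \<circ> sref i) = Suc (len N y)"
proof -
  let ?s = "sref i"
  let ?t = "\<lambda>(a, b). (?s a, ?s b)"
  have t_mem: "(?s a, ?s b) \<in> inversions N y" if "(a, b) \<in> inversions N (y \<circ> ?s)" "(a, b) \<noteq> (i, Suc i)" for a b
    using that assms by (auto simp: inversions_def sref_apply split: if_splits)
  have eq: "inversions N (y \<circ> ?s) = insert (i, Suc i) (?t ` inversions N y)"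
  proof (intro equalityI subsetI)
    fix p assume p: "p \<in> inversions N (y \<circ> ?s)"
    obtain a b where ab: "p = (a, b)" by (cases p)
    show "p \<in> insert (i, Suc i) (?t ` inversions N y)"
    proof (cases "p = (i, Suc i)")
      case False
      then have "(?s a, ?s b) \<in> inversions N y" using t_mem p ab by simp
      moreover have "p = ?t (?s a, ?s b)" using ab by simp
      ultimately show ?thesis by blast
    qed simp
  next
    fix p assume "p \<in> insert (i, Suc i) (?t ` inversions N y)"
    then show "p \<in> inversions N (y \<circ> ?s)"
      using assms by (auto simp: inversions_def sref_apply split: if_splits)
  qed
  have "inj_on ?t (inversions N y)"
    by (rule inj_onI) (auto simp: sref_apply split: if_splits)
  moreover have "(i, Suc i) \<notin> ?t ` inversions N y"
    using assms by (auto simp: inversions_def sref_apply split: if_splits)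
  ultimately show ?thesis
    unfolding len_eq_card_inversions eq using finite_inversions by (simp add: card_image)
qed

lemma len_comp_sref_cases:
  assumes "1 \<le> i" "i \<le> N"
  shows "(y i < y (Suc i) \<and> len N (y \<circ> sref i) = Suc (len N y)) \<or>
         (y (Suc i) < y i \<and> len N y = Suc (len N (y \<circ> sref i))) \<or>
         (y i = y (Suc i) \<and> y \<circ> sref i = y)"
proof (cases "y i < y (Suc i)")
  case True then show ?thesis using len_comp_sref_ascent[OF assms] by blast
next
  case False
  show ?thesis
  proof (cases "y (Suc i) < y i")
    case True
    have "(y \<circ> sref i) i < (y \<circ> sref i) (Suc i)" using True by (simp add: sref_apply)
    from len_comp_sref_ascent[OF assms this] have "len N y = Suc (len N (y \<circ> sref i))"
      by (simp only: comp_sref_sref)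
    with True show ?thesis by blast
  next
    case False
    with \<open>\<not> y i < y (Suc i)\<close> have "y i = y (Suc i)" by simp
    moreover from this have "y \<circ> sref i = y" by (auto simp: fun_eq_iff sref_apply)
    ultimately show ?thesis by blast
  qed
qed

lemma len_comp_sref_le: "1 \<le> i \<Longrightarrow> i \<le> N \<Longrightarrow> len N (y \<circ> sref i) \<le> Suc (len N y)"
  using len_comp_sref_cases[of i N y] by auto

lemma len_le_comp_sref: "1 \<le> i \<Longrightarrow> i \<le> N \<Longrightarrow> len N y \<le> Suc (len N (y \<circ> sref i))"
  using len_comp_sref_cases[of i N y] by auto

lemma Wgrp_len_comp_sref_cases:
  assumes "y \<in> Wgrp N" "1 \<le> i" "i \<le> N"
  shows "(y i < y (Suc i) \<and> len N (y \<circ> sref i) = Suc (len N y)) \<or>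
         (y (Suc i) < y i \<and> len N y = Suc (len N (y \<circ> sref i)))"
proof -
  have "y i \<noteq> y (Suc i)" using Wgrp_inj[OF assms(1)] by (metis injD n_not_Suc_n)
  then show ?thesis using len_comp_sref_cases[OF assms(2,3), of y] by auto
qed

lemma len_comp_sref_less_iff:
  assumes "y \<in> Wgrp N" "1 \<le> i" "i \<le> N"
  shows "len N (y \<circ> sref i) < len N y \<longleftrightarrow> y (Suc i) < y i"
  using Wgrp_len_comp_sref_cases[OF assms] by auto

lemma len_sref_comp_ascent:
  assumes x: "x \<in> Wgrp N" and j: "1 \<le> j" "j \<le> N"
    and p: "x p = j" and q: "x q = Suc j" and pq: "p < q"
  shows "len N (sref j \<circ> x) = Suc (len N x)"
proof -
  have pq_range: "p \<in> {1..Suc N}" "q \<in> {1..Suc N}"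
    using Wgrp_apply_outside[OF x, of p] Wgrp_apply_outside[OF x, of q] p q j by force+
  have eq: "inversions N (sref j \<circ> x) = insert (p, q) (inversions N x)"
  proof (rule set_eqI)
    fix r :: "nat \<times> nat"
    obtain a b where r: "r = (a, b)" by (cases r)
    show "r \<in> inversions N (sref j \<circ> x) \<longleftrightarrow> r \<in> insert (p, q) (inversions N x)"
    proof (cases "(a, b) = (p, q)")
      case True then show ?thesis using r pq_range pq p q by (auto simp: inversions_def sref_apply)
    next
      case False
      have "x a = Suc j \<Longrightarrow> a = q" "x b = j \<Longrightarrow> b = p" "x a = j \<Longrightarrow> a = p" "x b = Suc j \<Longrightarrow> b = q"
        using p q Wgrp_inj[OF x] by (metis injD)+
      with False pq show ?thesis using r by (auto simp: inversions_def sref_apply)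
    qed
  qed
  have "(p, q) \<notin> inversions N x" using p q by (auto simp: inversions_def)
  then show ?thesis unfolding len_eq_card_inversions eq using finite_inversions by simp
qed

lemma len_sref_comp_cases:
  assumes x: "x \<in> Wgrp N" and j: "1 \<le> j" "j \<le> N"
    and p: "x p = j" and q: "x q = Suc j"
  shows "(p < q \<and> len N (sref j \<circ> x) = Suc (len N x)) \<or>
         (q < p \<and> len N x = Suc (len N (sref j \<circ> x)))"
proof (cases "p < q")
  case True then show ?thesis using len_sref_comp_ascent[OF assms] by simp
next
  case False
  with p q have qp: "q < p" by (metis linorder_neqE_nat n_not_Suc_n)
  have "sref j \<circ> x \<in> Wgrp N" using Wgrp_comp[OF sref_in_Wgrp[OF j] x] .
  from len_sref_comp_ascent[OF this j _ _ qp] p q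
  show ?thesis using qp by (simp add: sref_apply)
qed

lemma len_sref_comp_le:
  assumes x: "x \<in> Wgrp N" and j: "1 \<le> j" "j \<le> N"
  shows "len N (sref j \<circ> x) \<le> Suc (len N x)"
proof -
  obtain p q where "x p = j" "x q = Suc j"
    using Wgrp_preimage[OF x, of j] Wgrp_preimage[OF x, of "Suc j"] j by (metis atLeastAtMost_iff le_SucI Suc_le_mono)
  then show ?thesis using len_sref_comp_cases[OF x j] by fastforce
qed

lemma len_sref_comp_less_iff:
  assumes "z \<in> Wgrp N" "1 \<le> j" "j \<le> N" "z p = j" "z q = Suc j"
  shows "len N (sref j \<circ> z) < len N z \<longleftrightarrow> q < p"
  using len_sref_comp_cases[OF assms] by auto

lemma len_comp_transpose_ascent:
  assumes "1 \<le> i" "i < j" "j \<le> Suc N" "y i < y j"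
  shows "len N y < len N (y \<circ> Transposition.transpose i j)"
proof -
  let ?t = "Transposition.transpose i j"
  define f where "f = (\<lambda>(a, b). if a < i \<or> j < b then (?t a, ?t b) else (a::nat, b::nat))"
  have t: "\<And>a. ?t a = (if a = i then j else if a = j then i else a)"
    by (simp add: Transposition.transpose_def)
  have "f ` inversions N y \<subseteq> inversions N (y \<circ> ?t) - {(i, j)}"
    using assms by (auto simp: f_def inversions_def t split: if_splits)
  moreover have "inj_on f (inversions N y)"
    by (rule inj_onI) (use assms in \<open>auto simp: f_def inversions_def t split: if_splits\<close>)
  ultimately have "card (inversions N y) \<le> card (inversions N (y \<circ> ?t) - {(i, j)})"
    using finite_inversions by (metis card_inj_on_le finite_Diff)
  moreover have "(i, j) \<in> inversions N (y \<circ> ?t)" using assms by (auto simp: inversions_def)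
  then have "card (inversions N (y \<circ> ?t) - {(i, j)}) < card (inversions N (y \<circ> ?t))"
    using finite_inversions by (meson card_Diff1_less)
  ultimately show ?thesis by (simp add: len_eq_card_inversions)
qed

lemma len_comp_transpose_descent:
  assumes "1 \<le> i" "i < j" "j \<le> Suc N" "y j < y i"
  shows "len N (y \<circ> Transposition.transpose i j) < len N y"
proof -
  have "(y \<circ> Transposition.transpose i j) i < (y \<circ> Transposition.transpose i j) j" using assms by simp
  from len_comp_transpose_ascent[OF assms(1-3) this] show ?thesis
    by (metis comp_assoc comp_id transpose_comp_involutory)
qed

lemma len_le_len_left_inverse:
  assumes x: "x \<in> Wgrp N" and x': "x' \<circ> x = id"
  shows "len N x \<le> len N x'"
proof -
  let ?f = "\<lambda>(a, b). (x b, x a)"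
  have "?f ` inversions N x \<subseteq> inversions N x'"
    using x' Wgrp_apply_in[OF x] by (auto simp: inversions_def fun_eq_iff)
  moreover have "inj_on ?f (inversions N x)"
    using Wgrp_inj[OF x] by (auto simp: inj_on_def dest: injD)
  ultimately show ?thesis using card_inj_on_le finite_inversions by (metis len_eq_card_inversions)
qed

lemma strict_mono_on_self_map_eq:
  fixes f :: "nat \<Rightarrow> nat"
  assumes mono: "strict_mono_on {1..n} f" and maps: "f ` {1..n} \<subseteq> {1..n}" and a: "a \<in> {1..n}"
  shows "f a = a"
proof -
  have up: "a \<le> f a" if "a \<in> {1..n}" for a
    using that
  proof (induction a)
    case (Suc a)
    then show ?case
      using maps strict_mono_onD[OF mono, of a "Suc a"] by (cases "a = 0") force+
  qed simp
  have down: "f (n - d) \<le> n - d" if "d < n" for d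
    using that
  proof (induction d)
    case 0
    then have "n \<in> {1..n}" by simp
    then have "f n \<in> {1..n}" using maps by blast
    then show ?case by simp
  next
    case (Suc d)
    then have "f (n - Suc d) < f (n - d)" by (intro strict_mono_onD[OF mono]) auto
    with Suc show ?case by simp
  qed
  have "n - (n - a) = a" "n - a < n" using a by auto
  with down[of "n - a"] up[OF a] show ?thesis by simp
qed

lemma Wgrp_descent_exists:
  assumes x: "x \<in> Wgrp N" and "x \<noteq> id"
  obtains i where "1 \<le> i" "i \<le> N" "x (Suc i) < x i"
proof -
  have "\<exists>i. 1 \<le> i \<and> i \<le> N \<and> x (Suc i) < x i"
  proof (rule ccontr)
    assume no_descent: "\<not> ?thesis"
    have asc: "x i < x (Suc i)" if "i \<in> {1..N}" for i
    proof -
      have "x i \<noteq> x (Suc i)" using Wgrp_inj[OF x] by (metis injD n_not_Suc_n)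
      then show ?thesis using no_descent that by auto
    qed
    have "strict_mono_on {1..Suc N} x"
      by (rule strict_mono_onI, rule lift_Suc_mono_less_ivl[where N = "{1..N}" and f = x, OF asc]) auto
    then have "x a = a" if "a \<in> {1..Suc N}" for a
      using strict_mono_on_self_map_eq Wgrp_apply_in[OF x] that by blast
    then have "x = id" using Wgrp_apply_outside[OF x] by (metis eq_id_iff)
    with \<open>x \<noteq> id\<close> show False ..
  qed
  then show ?thesis using that by blast
qed

lemma len_eq_0_imp_id:
  assumes x: "x \<in> Wgrp N" and "len N x = 0"
  shows "x = id"
proof (rule ccontr)
  assume "x \<noteq> id"
  then obtain i where "1 \<le> i" "i \<le> N" "x (Suc i) < x i" using Wgrp_descent_exists[OF x] by blast
  then have "(i, Suc i) \<in> inversions N x" by (simp add: inversions_def)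
  with \<open>len N x = 0\<close> show False using finite_inversions by (simp add: len_eq_card_inversions)
qed

lemma wordprod_Nil [simp]: "wordprod [] = id"
  by (simp add: wordprod_def)

lemma wordprod_Cons [simp]: "wordprod (i # is) = sref i \<circ> wordprod is"
  by (simp add: wordprod_def)

lemma wordprod_snoc [simp]: "wordprod (is @ [i]) = wordprod is \<circ> sref i"
  by (induction "is") (auto simp: comp_assoc)

lemma wordprod_rev_comp: "wordprod (rev is) \<circ> wordprod is = id"
  by (induction "is") (auto simp: comp_assoc fun_eq_iff)

lemma wordprod_comp_rev: "wordprod is \<circ> wordprod (rev is) = id"
  using wordprod_rev_comp[of "rev is"] by simp

lemma wordprod_in_Wgrp: "set is \<subseteq> {1..N} \<Longrightarrow> wordprod is \<in> Wgrp N"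
  by (induction "is") (auto simp: id_in_Wgrp intro!: Wgrp_comp sref_in_Wgrp)

lemma len_wordprod_le: "set is \<subseteq> {1..N} \<Longrightarrow> len N (wordprod is) \<le> length is"
proof (induction "is" rule: rev_induct)
  case (snoc i "is")
  then have s: "set is \<subseteq> {1..N}" "1 \<le> i" "i \<le> N" by auto
  have "len N (wordprod is \<circ> sref i) \<le> Suc (length is)"
    using len_comp_sref_le[OF s(2,3), of "wordprod is"] snoc.IH[OF s(1)] by linarith
  then show ?case by (simp only: wordprod_snoc length_append_singleton)
qed simp

definition reduced :: "nat \<Rightarrow> nat list \<Rightarrow> bool" where
  "reduced N is \<longleftrightarrow> set is \<subseteq> {1..N} \<and> length is = len N (wordprod is)"

lemma reduced_word_exists:
  assumes "x \<in> Wgrp N"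
  shows "\<exists>is. set is \<subseteq> {1..N} \<and> wordprod is = x \<and> length is = len N x"
  using assms
proof (induction "len N x" arbitrary: x)
  case 0
  then have "x = id" using len_eq_0_imp_id[of x N] by simp
  then show ?case by (intro exI[of _ "[]"]) (simp add: len_id[unfolded id_def])
next
  case (Suc n)
  then have "x \<noteq> id" by auto
  then obtain i where i: "1 \<le> i" "i \<le> N" "x (Suc i) < x i"
    using Wgrp_descent_exists[OF Suc.prems] by blast
  then have len_x: "len N x = Suc (len N (x \<circ> sref i))"
    using Wgrp_len_comp_sref_cases[OF Suc.prems i(1,2)] by auto
  moreover have "x \<circ> sref i \<in> Wgrp N" using Suc.prems i comp_sref_in_Wgrp_iff by blast
  ultimately obtain ws where "set ws \<subseteq> {1..N}" "wordprod ws = x \<circ> sref i" "length ws = len N (x \<circ> sref i)"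
    using Suc.hyps by auto
  with i len_x show ?case by (intro exI[of _ "ws @ [i]"]) auto
qed

lemma rword_spec:
  assumes "x \<in> Wgrp N"
  shows "set (rword N x) \<subseteq> {1..N}" "wordprod (rword N x) = x" "length (rword N x) = len N x"
  using someI_ex[OF reduced_word_exists[OF assms]] by (simp_all add: rword_def)

lemma reduced_rword: "x \<in> Wgrp N \<Longrightarrow> reduced N (rword N x)"
  using rword_spec[of x N] by (simp add: reduced_def)

lemma reduced_snoc:
  assumes "reduced N (is @ [i])"
  shows "reduced N is" "len N (wordprod is \<circ> sref i) = Suc (len N (wordprod is))"
proof -
  have "set is \<subseteq> {1..N}" "1 \<le> i" "i \<le> N" using assms by (auto simp: reduced_def)
  with assms len_wordprod_le[of "is" N] len_comp_sref_le[of i N "wordprod is"]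
  show "reduced N is" "len N (wordprod is \<circ> sref i) = Suc (len N (wordprod is))"
    by (simp_all add: reduced_def)
qed

lemma reduced_Cons:
  assumes "reduced N (i # is)"
  shows "reduced N is" "len N (sref i \<circ> wordprod is) = Suc (len N (wordprod is))"
proof -
  have s: "set is \<subseteq> {1..N}" "1 \<le> i" "i \<le> N" using assms by (auto simp: reduced_def)
  with assms len_wordprod_le[of "is" N] len_sref_comp_le[OF wordprod_in_Wgrp[OF s(1)] s(2,3)]
  show "reduced N is" "len N (sref i \<circ> wordprod is) = Suc (len N (wordprod is))"
    by (simp_all add: reduced_def)
qed

lemma reduced_rev:
  assumes "reduced N is"
  shows "reduced N (rev is)"
proof -
  have s: "set is \<subseteq> {1..N}" using assms by (simp add: reduced_def)
  have "len N (wordprod is) \<le> len N (wordprod (rev is))"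
    by (rule len_le_len_left_inverse[OF wordprod_in_Wgrp[OF s] wordprod_rev_comp])
  moreover have "len N (wordprod (rev is)) \<le> len N (wordprod is)"
    by (rule len_le_len_left_inverse[OF wordprod_in_Wgrp wordprod_comp_rev]) (use s in auto)
  ultimately show ?thesis using assms by (simp add: reduced_def)
qed

lemma rword_id: "rword N id = []"
  using rword_spec[OF id_in_Wgrp, of N] by simp

lemma len_sref: "1 \<le> j \<Longrightarrow> j \<le> N \<Longrightarrow> len N (sref j) = 1"
  using len_comp_sref_ascent[of j N id] by simp

lemma rword_sref:
  assumes j: "1 \<le> j" "j \<le> N"
  shows "rword N (sref j) = [j]"
proof -
  have "length (rword N (sref j)) = 1"
    using rword_spec(3)[OF sref_in_Wgrp[OF j]] len_sref[OF j] by simp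
  then obtain i where i: "rword N (sref j) = [i]"
    by (cases "rword N (sref j)") auto
  then have "sref i i = sref j i" using rword_spec(2)[OF sref_in_Wgrp[OF j]] by simp
  then have "i = j" by (auto simp: sref_apply split: if_split_asm)
  with i show ?thesis by simp
qed

section \<open>Multiplication by standard generators\<close>

definition mult_Hs_inv :: "nat \<Rightarrow> hecke \<Rightarrow> nat \<Rightarrow> hecke" where
  "mult_Hs_inv N h i = hadd (mult_Hs N h i) (hscale (fls_X - fls_X_inv) h)"

definition lmult_Hs :: "nat \<Rightarrow> nat \<Rightarrow> hecke \<Rightarrow> hecke" where
  "lmult_Hs N j h = (\<lambda>z. h (sref j \<circ> z) +
      (if len N (sref j \<circ> z) < len N z then (fls_X_inv - fls_X) * h z else 0))"

definition mult_word :: "nat \<Rightarrow> hecke \<Rightarrow> nat list \<Rightarrow> hecke" where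
  "mult_word N h ws = fold (\<lambda>i g. mult_Hs N g i) ws h"

definition mult_bar_word :: "nat \<Rightarrow> hecke \<Rightarrow> nat list \<Rightarrow> hecke" where
  "mult_bar_word N h ws = fold (\<lambda>i g. mult_Hs_inv N g i) ws h"

definition lmult_word :: "nat \<Rightarrow> nat list \<Rightarrow> hecke \<Rightarrow> hecke" where
  "lmult_word N ws h = foldr (lmult_Hs N) ws h"

definition supported :: "nat \<Rightarrow> hecke \<Rightarrow> bool" where
  "supported N h \<longleftrightarrow> (\<forall>x. x \<notin> Wgrp N \<longrightarrow> h x = 0)"

lemma mult_Hs_inv_apply:
  "mult_Hs_inv N h i z = mult_Hs N h i z + (fls_X - fls_X_inv) * h z"
  by (simp add: mult_Hs_inv_def hadd_def hscale_def)

lemma mult_word_Nil [simp]: "mult_word N h [] = h"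
  and mult_word_Cons [simp]: "mult_word N h (i # ws) = mult_word N (mult_Hs N h i) ws"
  and mult_word_snoc [simp]: "mult_word N h (ws @ [i]) = mult_Hs N (mult_word N h ws) i"
  by (simp_all add: mult_word_def)

lemma mult_bar_word_Nil [simp]: "mult_bar_word N h [] = h"
  and mult_bar_word_Cons [simp]: "mult_bar_word N h (i # ws) = mult_bar_word N (mult_Hs_inv N h i) ws"
  and mult_bar_word_snoc [simp]: "mult_bar_word N h (ws @ [i]) = mult_Hs_inv N (mult_bar_word N h ws) i"
  by (simp_all add: mult_bar_word_def)

lemma lmult_word_Nil [simp]: "lmult_word N [] h = h"
  and lmult_word_Cons [simp]: "lmult_word N (i # ws) h = lmult_Hs N i (lmult_word N ws h)"
  by (simp_all add: lmult_word_def)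

lemma supported_Hstd: "x \<in> Wgrp N \<Longrightarrow> supported N (Hstd x)"
  by (auto simp: supported_def Hstd_def)

lemma supported_mult_Hs: "supported N h \<Longrightarrow> 1 \<le> i \<Longrightarrow> i \<le> N \<Longrightarrow> supported N (mult_Hs N h i)"
  by (simp add: supported_def mult_Hs_def comp_sref_in_Wgrp_iff)

lemma supported_mult_Hs_inv: "supported N h \<Longrightarrow> 1 \<le> i \<Longrightarrow> i \<le> N \<Longrightarrow> supported N (mult_Hs_inv N h i)"
  using supported_mult_Hs by (simp add: supported_def mult_Hs_inv_apply)

lemma supported_lmult_Hs: "supported N h \<Longrightarrow> 1 \<le> i \<Longrightarrow> i \<le> N \<Longrightarrow> supported N (lmult_Hs N i h)"
  by (simp add: supported_def lmult_Hs_def sref_comp_in_Wgrp_iff)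

lemma supported_mult_word: "supported N h \<Longrightarrow> set ws \<subseteq> {1..N} \<Longrightarrow> supported N (mult_word N h ws)"
  by (induction ws arbitrary: h) (auto simp: supported_mult_Hs)

lemma supported_mult_bar_word: "supported N h \<Longrightarrow> set ws \<subseteq> {1..N} \<Longrightarrow> supported N (mult_bar_word N h ws)"
  by (induction ws arbitrary: h) (auto simp: supported_mult_Hs_inv)

lemma supported_lmult_word: "supported N h \<Longrightarrow> set ws \<subseteq> {1..N} \<Longrightarrow> supported N (lmult_word N ws h)"
  by (induction ws) (auto simp: supported_lmult_Hs)

lemma supported_eq_sum_Hstd:
  assumes "supported N g"
  shows "(\<lambda>z. \<Sum>u\<in>Wgrp N. g u * Hstd u z) = g"
proof (rule ext)
  fix z
  have "(\<Sum>u\<in>Wgrp N. g u * Hstd u z) = (\<Sum>u\<in>Wgrp N. if u = z then g z else 0)"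
    by (rule sum.cong) (auto simp: Hstd_def)
  also have "\<dots> = g z" using assms by (auto simp: supported_def finite_Wgrp)
  finally show "(\<Sum>u\<in>Wgrp N. g u * Hstd u z) = g z" .
qed

lemma mult_Hs_inv_mult_Hs:
  assumes h: "supported N h" and i: "1 \<le> i" "i \<le> N"
  shows "mult_Hs_inv N (mult_Hs N h i) i = h" and "mult_Hs N (mult_Hs_inv N h i) i = h"
proof -
  have "mult_Hs_inv N (mult_Hs N h i) i z = h z \<and> mult_Hs N (mult_Hs_inv N h i) i z = h z" for z
  proof (cases "z \<in> Wgrp N")
    case False
    then have "z \<circ> sref i \<notin> Wgrp N" using comp_sref_in_Wgrp_iff[OF i] by blast
    with False h have "h z = 0" "h (z \<circ> sref i) = 0" by (auto simp: supported_def)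
    then show ?thesis by (simp add: mult_Hs_inv_apply mult_Hs_def)
  next
    case True
    from Wgrp_len_comp_sref_cases[OF True i] show ?thesis
    proof (elim disjE conjE)
      assume "len N (z \<circ> sref i) = Suc (len N z)"
      then show ?thesis by (simp add: mult_Hs_inv_apply mult_Hs_def algebra_simps)
    next
      assume "len N z = Suc (len N (z \<circ> sref i))"
      then show ?thesis by (simp add: mult_Hs_inv_apply mult_Hs_def algebra_simps)
    qed
  qed
  then show "mult_Hs_inv N (mult_Hs N h i) i = h" "mult_Hs N (mult_Hs_inv N h i) i = h"
    by auto
qed

lemma sref_comp_eq_comp_sref:
  assumes z: "z \<in> Wgrp N"
    and zi: "(z i = j \<and> z (Suc i) = Suc j) \<or> (z i = Suc j \<and> z (Suc i) = j)"
  shows "sref j \<circ> z = z \<circ> sref i"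
proof (rule ext)
  fix a
  show "(sref j \<circ> z) a = (z \<circ> sref i) a"
  proof (cases "a = i \<or> a = Suc i")
    case False
    then have "z a \<noteq> j" "z a \<noteq> Suc j" using zi Wgrp_inj[OF z] by (metis injD)+
    with False show ?thesis by (simp add: sref_apply)
  qed (use zi in \<open>auto simp: sref_apply\<close>)
qed

lemma right_descent_sref_comp_iff:
  assumes z: "z \<in> Wgrp N" and i: "1 \<le> i" "i \<le> N" and j: "1 \<le> j" "j \<le> N"
    and ne: "sref j \<circ> z \<noteq> z \<circ> sref i"
  shows "len N (sref j \<circ> z \<circ> sref i) < len N (sref j \<circ> z) \<longleftrightarrow> len N (z \<circ> sref i) < len N z"
proof -
  have "\<not> (z i = j \<and> z (Suc i) = Suc j)" "\<not> (z i = Suc j \<and> z (Suc i) = j)"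
    using sref_comp_eq_comp_sref[OF z] ne by blast+
  then have "sref j (z (Suc i)) < sref j (z i) \<longleftrightarrow> z (Suc i) < z i"
    using sref_less_sref_iff by blast
  then show ?thesis
    using len_comp_sref_less_iff[OF Wgrp_comp[OF sref_in_Wgrp[OF j] z] i] len_comp_sref_less_iff[OF z i]
    by simp
qed

lemma left_descent_comp_sref_iff:
  assumes z: "z \<in> Wgrp N" and i: "1 \<le> i" "i \<le> N" and j: "1 \<le> j" "j \<le> N"
    and ne: "sref j \<circ> z \<noteq> z \<circ> sref i"
  shows "len N (sref j \<circ> z \<circ> sref i) < len N (z \<circ> sref i) \<longleftrightarrow> len N (sref j \<circ> z) < len N z"
proof -
  obtain p q where p: "z p = j" and q: "z q = Suc j"
    using Wgrp_preimage[OF z, of j] Wgrp_preimage[OF z, of "Suc j"] j by (metis atLeastAtMost_iff le_SucI Suc_le_mono)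
  have "\<not> (p = i \<and> q = Suc i)" "\<not> (p = Suc i \<and> q = i)"
    using sref_comp_eq_comp_sref[OF z] ne p q by blast+
  then have "sref i q < sref i p \<longleftrightarrow> q < p" using sref_less_sref_iff by blast
  moreover have "len N (sref j \<circ> (z \<circ> sref i)) < len N (z \<circ> sref i) \<longleftrightarrow> sref i q < sref i p"
    by (rule len_sref_comp_less_iff[OF Wgrp_comp[OF z sref_in_Wgrp[OF i]] j]) (use p q in auto)
  ultimately show ?thesis
    unfolding comp_assoc using len_sref_comp_less_iff[OF z j p q] by blast
qed

lemma lmult_Hs_mult_Hs_commute:
  assumes h: "supported N h" and i: "1 \<le> i" "i \<le> N" and j: "1 \<le> j" "j \<le> N"
  shows "lmult_Hs N j (mult_Hs N h i) = mult_Hs N (lmult_Hs N j h) i"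
proof (rule ext)
  fix z
  show "lmult_Hs N j (mult_Hs N h i) z = mult_Hs N (lmult_Hs N j h) i z"
  proof (cases "z \<in> Wgrp N")
    case False
    with supported_lmult_Hs[OF supported_mult_Hs[OF h i] j] supported_mult_Hs[OF supported_lmult_Hs[OF h j] i]
    show ?thesis by (simp add: supported_def)
  next
    case z: True
    show ?thesis
    proof (cases "sref j \<circ> z = z \<circ> sref i")
      case True
      then show ?thesis by (simp add: lmult_Hs_def mult_Hs_def comp_assoc)
    next
      case False
      note descents = right_descent_sref_comp_iff[OF z i j False] left_descent_comp_sref_iff[OF z i j False]
      show ?thesis
        unfolding lmult_Hs_def mult_Hs_def comp_assoc[symmetric]
        by (cases "len N (z \<circ> sref i) < len N z"; cases "len N (sref j \<circ> z) < len N z")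
           (simp_all add: descents algebra_simps)
    qed
  qed
qed

lemma mult_word_sum:
  "mult_word N (\<lambda>z. \<Sum>u\<in>U. a u * f u z) ws = (\<lambda>z. \<Sum>u\<in>U. a u * mult_word N (f u) ws z)"
proof (induction ws arbitrary: f)
  case (Cons i ws)
  have "mult_Hs N (\<lambda>z. \<Sum>u\<in>U. a u * f u z) i = (\<lambda>z. \<Sum>u\<in>U. a u * mult_Hs N (f u) i z)"
    by (auto simp: mult_Hs_def sum.distrib sum_distrib_left distrib_left mult.left_commute)
  then show ?case by (simp add: Cons.IH)
qed simp

lemma mult_Hs_Hstd_ascent:
  assumes "len N (x \<circ> sref i) = Suc (len N x)"
  shows "mult_Hs N (Hstd x) i = Hstd (x \<circ> sref i)"
proof -
  have "x \<circ> sref i \<noteq> x" using assms by auto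
  then show ?thesis using assms by (auto simp: mult_Hs_def Hstd_def comp_sref_eq_iff)
qed

lemma lmult_Hs_Hstd_ascent:
  assumes "len N (sref j \<circ> x) = Suc (len N x)"
  shows "lmult_Hs N j (Hstd x) = Hstd (sref j \<circ> x)"
proof -
  have "sref j \<circ> x \<noteq> x" using assms by auto
  then show ?thesis using assms by (auto simp: lmult_Hs_def Hstd_def sref_comp_eq_iff)
qed

lemma mult_word_Hstd_id: "reduced N ws \<Longrightarrow> mult_word N (Hstd id) ws = Hstd (wordprod ws)"
proof (induction ws rule: rev_induct)
  case (snoc i ws)
  then show ?case using reduced_snoc[OF snoc.prems] mult_Hs_Hstd_ascent by (simp add: o_def id_def)
qed simp

lemma lmult_word_Hstd_id: "reduced N ws \<Longrightarrow> lmult_word N ws (Hstd id) = Hstd (wordprod ws)"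
proof (induction ws)
  case (Cons i ws)
  then show ?case using reduced_Cons[OF Cons.prems] lmult_Hs_Hstd_ascent by (simp add: o_def id_def)
qed simp

lemma mult_word_lmult_word_commute:
  assumes "supported N h" "set ws \<subseteq> {1..N}" "set ws' \<subseteq> {1..N}"
  shows "mult_word N (lmult_word N ws' h) ws = lmult_word N ws' (mult_word N h ws)"
proof -
  have mult_Hs_lmult_word: "mult_Hs N (lmult_word N ws' g) i = lmult_word N ws' (mult_Hs N g i)"
    if "supported N g" "1 \<le> i" "i \<le> N" for g i
    using that assms(3)
  proof (induction ws' arbitrary: g)
    case (Cons j ws')
    then show ?case
      using lmult_Hs_mult_Hs_commute[OF supported_lmult_word[OF Cons.prems(1)], of ws' i j] by simp
  qed simp
  show ?thesis using assms(1,2)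
  proof (induction ws arbitrary: h)
    case (Cons i ws)
    then show ?case by (simp add: mult_Hs_lmult_word supported_mult_Hs)
  qed simp
qed

text \<open>Checked on the basis \<^term>\<open>Hstd u = lmult_word N (rword N u) (Hstd id)\<close>: right
  multiplication commutes with left multiplication and sends \<^term>\<open>Hstd id\<close> to
  \<^term>\<open>Hstd (wordprod ws)\<close>, so no braid relations are needed.\<close>

lemma mult_word_reduced_indep:
  assumes r1: "reduced N ws1" and r2: "reduced N ws2" and e: "wordprod ws1 = wordprod ws2"
    and g: "supported N g"
  shows "mult_word N g ws1 = mult_word N g ws2"
proof -
  have on_Hstd: "mult_word N (Hstd u) ws1 = mult_word N (Hstd u) ws2" if u: "u \<in> Wgrp N" for u
  proof -
    have "Hstd u = lmult_word N (rword N u) (Hstd id)"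
      using lmult_word_Hstd_id[OF reduced_rword[OF u]] rword_spec[OF u] by simp
    moreover have "mult_word N (lmult_word N (rword N u) (Hstd id)) ws
        = lmult_word N (rword N u) (Hstd (wordprod ws))" if "reduced N ws" for ws
      using that mult_word_lmult_word_commute[OF supported_Hstd[OF id_in_Wgrp], where ws = ws and ws' = "rword N u"]
        rword_spec[OF u] mult_word_Hstd_id by (simp add: reduced_def)
    ultimately show ?thesis using r1 r2 e by simp
  qed
  have "mult_word N g ws1 = (\<lambda>z. \<Sum>u\<in>Wgrp N. g u * mult_word N (Hstd u) ws1 z)"
    using mult_word_sum[of N g "\<lambda>u. Hstd u" "Wgrp N" ws1] supported_eq_sum_Hstd[OF g] by simp
  also have "\<dots> = (\<lambda>z. \<Sum>u\<in>Wgrp N. g u * mult_word N (Hstd u) ws2 z)"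
    by (simp add: on_Hstd)
  also have "\<dots> = mult_word N g ws2"
    using mult_word_sum[of N g "\<lambda>u. Hstd u" "Wgrp N" ws2] supported_eq_sum_Hstd[OF g] by simp
  finally show ?thesis .
qed

lemma mult_bar_word_mult_word_rev:
  "supported N h \<Longrightarrow> set ws \<subseteq> {1..N} \<Longrightarrow> mult_bar_word N (mult_word N h (rev ws)) ws = h"
proof (induction ws arbitrary: h)
  case (Cons i ws)
  then show ?case using mult_Hs_inv_mult_Hs(1)[OF supported_mult_word[OF Cons.prems(1)], of "rev ws" i]
    by simp
qed simp

lemma mult_word_rev_mult_bar_word:
  "supported N h \<Longrightarrow> set ws \<subseteq> {1..N} \<Longrightarrow> mult_word N (mult_bar_word N h ws) (rev ws) = h"
proof (induction ws arbitrary: h rule: rev_induct)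
  case (snoc i ws)
  then show ?case using mult_Hs_inv_mult_Hs(2)[OF supported_mult_bar_word[OF snoc.prems(1)], of ws i]
    by simp
qed simp

lemma mult_bar_word_reduced_indep:
  assumes r1: "reduced N ws1" and r2: "reduced N ws2" and e: "wordprod ws1 = wordprod ws2"
  shows "mult_bar_word N (Hstd id) ws1 = mult_bar_word N (Hstd id) ws2"
proof -
  have s1: "set ws1 \<subseteq> {1..N}" and s2: "set ws2 \<subseteq> {1..N}" using r1 r2 by (auto simp: reduced_def)
  let ?G = "mult_bar_word N (Hstd id) ws2"
  have hid: "supported N (Hstd id)" by (rule supported_Hstd[OF id_in_Wgrp])
  have "wordprod (rev ws1) = wordprod (rev ws2)"
    by (metis e comp_assoc comp_id id_comp wordprod_comp_rev wordprod_rev_comp)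
  then have "mult_word N ?G (rev ws1) = mult_word N ?G (rev ws2)"
    using mult_word_reduced_indep reduced_rev r1 r2 supported_mult_bar_word[OF hid s2] by blast
  also have "\<dots> = Hstd id" by (rule mult_word_rev_mult_bar_word[OF hid s2])
  finally have "mult_bar_word N (Hstd id) ws1 = mult_bar_word N (mult_word N ?G (rev ws1)) ws1" by simp
  also have "\<dots> = ?G" by (rule mult_bar_word_mult_word_rev[OF supported_mult_bar_word[OF hid s2] s1])
  finally show ?thesis .
qed

lemma barH_eq_mult_bar_word: "barH N x = mult_bar_word N (Hstd id) (rword N x)"
  by (simp add: barH_def mult_bar_word_def mult_Hs_inv_def)

lemma barH_reduced_word:
  assumes "x \<in> Wgrp N" "reduced N ws" "wordprod ws = x"
  shows "barH N x = mult_bar_word N (Hstd id) ws"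
  using mult_bar_word_reduced_indep[OF reduced_rword[OF assms(1)] assms(2)] rword_spec[OF assms(1)] assms(3)
  by (simp add: barH_eq_mult_bar_word)

lemma supported_barH: "x \<in> Wgrp N \<Longrightarrow> supported N (barH N x)"
  unfolding barH_eq_mult_bar_word using supported_mult_bar_word[OF supported_Hstd[OF id_in_Wgrp]] rword_spec
  by blast

lemma barH_id: "barH N id = Hstd id"
  by (simp add: barH_eq_mult_bar_word rword_id)

lemma barH_comp_sref_ascent:
  assumes x: "x \<in> Wgrp N" and i: "1 \<le> i" "i \<le> N" and l: "len N (x \<circ> sref i) = Suc (len N x)"
  shows "barH N (x \<circ> sref i) = mult_Hs_inv N (barH N x) i"
proof -
  have r: "reduced N (rword N x @ [i])" using rword_spec[OF x] i l by (simp add: reduced_def)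
  have "barH N (x \<circ> sref i) = mult_bar_word N (Hstd id) (rword N x @ [i])"
    by (rule barH_reduced_word[OF Wgrp_comp[OF x sref_in_Wgrp[OF i]] r]) (simp add: rword_spec(2)[OF x])
  also have "\<dots> = mult_Hs_inv N (barH N x) i" by (simp add: barH_eq_mult_bar_word)
  finally show ?thesis .
qed

lemma mult_Hs_barH_descent:
  assumes x: "x \<in> Wgrp N" and i: "1 \<le> i" "i \<le> N" and l: "len N x = Suc (len N (x \<circ> sref i))"
  shows "mult_Hs N (barH N x) i = barH N (x \<circ> sref i)"
proof -
  have xs: "x \<circ> sref i \<in> Wgrp N" using Wgrp_comp[OF x sref_in_Wgrp[OF i]] .
  have "barH N x = mult_Hs_inv N (barH N (x \<circ> sref i)) i"
    using barH_comp_sref_ascent[OF xs i] l by simp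
  then show ?thesis using mult_Hs_inv_mult_Hs(2)[OF supported_barH[OF xs] i] by simp
qed

section \<open>Laurent polynomials\<close>

definition vpow :: "int \<Rightarrow> int fls" where
  "vpow i = fls_shift (- i) 1"

lemma fls_nth_vpow: "fls_nth (vpow i) n = (if n = i then 1 else 0)"
  by (simp add: vpow_def)

lemma vpow_add: "vpow a * vpow b = vpow (a + b)"
  unfolding vpow_def using fls_X_intpow_times_fls_X_intpow[of a b] by (simp add: add.commute)

lemma vpow_0: "vpow 0 = 1"
  by (simp add: vpow_def)

lemma fls_X_eq_vpow: "fls_X = vpow 1"
  by (simp add: vpow_def fls_X_conv_shift_1)

lemma fls_X_inv_eq_vpow: "fls_X_inv = vpow (-1)"
  by (simp add: vpow_def fls_X_inv_conv_shift_1)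

lemma fls_X_power_eq_vpow: "fls_X ^ n = vpow (int n)"
  by (simp add: vpow_def fls_X_power_conv_shift_1)

lemma fls_X_mult_vpow: "fls_X * vpow a = vpow (a + 1)" "fls_X_inv * vpow a = vpow (a - 1)"
  by (simp_all add: fls_X_eq_vpow fls_X_inv_eq_vpow vpow_add algebra_simps)

lemma fls_nth_vpow_mult: "fls_nth (vpow i * p) n = fls_nth p (n - i)"
  by (simp add: vpow_def fls_X_intpow_times_conv_shift)

lemma lpoly_vpow: "lpoly (vpow i)"
  by (simp add: lpoly_def fls_nth_vpow)

lemma lpoly_0: "lpoly 0"
  by (simp add: lpoly_def)

lemma lpoly_1: "lpoly 1"
  using lpoly_vpow[of 0] by (simp add: vpow_0)

lemma lpoly_add: "lpoly p \<Longrightarrow> lpoly q \<Longrightarrow> lpoly (p + q)"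
  unfolding lpoly_def
  by (rule finite_subset[of _ "{n. fls_nth p n \<noteq> 0} \<union> {n. fls_nth q n \<noteq> 0}"]) auto

lemma lpoly_diff: "lpoly p \<Longrightarrow> lpoly q \<Longrightarrow> lpoly (p - q)"
  unfolding lpoly_def
  by (rule finite_subset[of _ "{n. fls_nth p n \<noteq> 0} \<union> {n. fls_nth q n \<noteq> 0}"]) auto

lemma lpoly_vpow_mult: "lpoly p \<Longrightarrow> lpoly (vpow i * p)"
proof -
  assume "lpoly p"
  moreover have "{n. fls_nth (vpow i * p) n \<noteq> 0} = (\<lambda>n. n + i) ` {n. fls_nth p n \<noteq> 0}"
    by (auto simp: fls_nth_vpow_mult image_iff) (metis diff_add_cancel)
  ultimately show ?thesis unfolding lpoly_def by simp
qed

lemma lbar_nth: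
  assumes "lpoly p"
  shows "fls_nth (lbar p) n = fls_nth p (- n)"
proof -
  have "{n::nat. fls_nth p (- (- int n)) \<noteq> 0} = int -` {n. fls_nth p n \<noteq> 0}" by auto
  then have "finite {n::nat. fls_nth p (- (- int n)) \<noteq> 0}"
    using assms unfolding lpoly_def by (metis finite_vimageI inj_of_nat)
  then show ?thesis using assms
    by (simp add: lbar_def nth_Abs_fls_finite_nonzero_neg_nth)
qed

lemma lbar_add: "lpoly p \<Longrightarrow> lpoly q \<Longrightarrow> lbar (p + q) = lbar p + lbar q"
  by (rule fls_eqI) (simp add: lbar_nth lpoly_add)

lemma lbar_diff: "lpoly p \<Longrightarrow> lpoly q \<Longrightarrow> lbar (p - q) = lbar p - lbar q"
  by (rule fls_eqI) (simp add: lbar_nth lpoly_diff)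

lemma lbar_vpow_mult: "lpoly p \<Longrightarrow> lbar (vpow i * p) = vpow (- i) * lbar p"
  by (rule fls_eqI) (simp add: lbar_nth lpoly_vpow_mult fls_nth_vpow_mult)

lemma lbar_0: "lbar 0 = 0"
  by (rule fls_eqI) (simp add: lbar_nth lpoly_0)

lemma lbar_1: "lbar 1 = 1"
  by (rule fls_eqI) (auto simp: lbar_nth lpoly_1)

lemma vZv_0: "vZv 0"
  by (simp add: vZv_def lpoly_0)

lemma vZv_vpow: "0 < i \<Longrightarrow> vZv (vpow i)"
  by (simp add: vZv_def lpoly_vpow fls_nth_vpow)

lemma vZv_diff: "vZv p \<Longrightarrow> vZv q \<Longrightarrow> vZv (p - q)"
  by (simp add: vZv_def lpoly_diff)

lemma vZv_lbar_fixed_eq_0: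
  assumes "vZv p" "lbar p = p"
  shows "p = 0"
proof (rule fls_eqI)
  fix n
  have "lpoly p" using assms(1) by (simp add: vZv_def)
  then have "fls_nth p n = fls_nth p (- n)" using lbar_nth assms(2) by metis
  then show "fls_nth p n = fls_nth 0 n"
    using assms(1) by (cases "n \<le> 0") (simp_all add: vZv_def)
qed

section \<open>The bar involution and Kazhdan--Lusztig elements\<close>

definition lpoly_coeffs :: "hecke \<Rightarrow> bool" where
  "lpoly_coeffs h \<longleftrightarrow> (\<forall>x. lpoly (h x))"

definition mult_bs :: "nat \<Rightarrow> hecke \<Rightarrow> nat \<Rightarrow> hecke" where
  "mult_bs N h i = hadd (mult_Hs N h i) (hscale fls_X h)"

lemma mult_bs_apply:
  "mult_bs N h i x = h (x \<circ> sref i) + (if len N (x \<circ> sref i) < len N x then fls_X_inv else fls_X) * h x"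
  by (simp add: mult_bs_def hadd_def hscale_def mult_Hs_def algebra_simps)

lemma mult_bs_eq_mult_Hs: "mult_bs N h i x = mult_Hs N h i x + fls_X * h x"
  by (simp add: mult_bs_def hadd_def hscale_def)

lemma lpoly_coeffs_Hstd: "lpoly_coeffs (Hstd x)"
  by (simp add: lpoly_coeffs_def Hstd_def lpoly_0 lpoly_1)

lemma lpoly_coeffs_mult_bs: "lpoly_coeffs h \<Longrightarrow> lpoly_coeffs (mult_bs N h i)"
  by (auto simp: lpoly_coeffs_def mult_bs_apply fls_X_eq_vpow fls_X_inv_eq_vpow
      intro!: lpoly_add lpoly_vpow_mult)

lemma supported_mult_bs: "supported N h \<Longrightarrow> 1 \<le> i \<Longrightarrow> i \<le> N \<Longrightarrow> supported N (mult_bs N h i)"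
  using supported_mult_Hs[of N h i] by (simp add: supported_def mult_bs_eq_mult_Hs)

lemma mult_bs_barH:
  assumes x: "x \<in> Wgrp N" and i: "1 \<le> i" "i \<le> N"
  shows "mult_bs N (barH N x) i z = barH N (x \<circ> sref i) z +
           (if len N (x \<circ> sref i) < len N x then fls_X else fls_X_inv) * barH N x z"
  using Wgrp_len_comp_sref_cases[OF x i]
proof (elim disjE conjE)
  assume "len N (x \<circ> sref i) = Suc (len N x)"
  with barH_comp_sref_ascent[OF x i this] show ?thesis
    by (simp add: mult_bs_eq_mult_Hs mult_Hs_inv_apply algebra_simps)
next
  assume "len N x = Suc (len N (x \<circ> sref i))"
  with mult_Hs_barH_descent[OF x i this] show ?thesis
    by (simp add: mult_bs_eq_mult_Hs)
qed

lemma hbar_mult_bs: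
  assumes h: "lpoly_coeffs h" and i: "1 \<le> i" "i \<le> N"
  shows "hbar N (mult_bs N h i) = mult_bs N (hbar N h) i"
proof (rule ext)
  fix z
  let ?W = "Wgrp N"
  let ?c = "\<lambda>x. if len N (x \<circ> sref i) < len N x then fls_X else fls_X_inv"
  have lbar_mult_bs: "lbar (mult_bs N h i x) = lbar (h (x \<circ> sref i)) + ?c x * lbar (h x)" for x
    using h unfolding lpoly_coeffs_def mult_bs_apply fls_X_eq_vpow fls_X_inv_eq_vpow
    by (simp add: lbar_add lpoly_vpow_mult lbar_vpow_mult)
  have reindex: "(\<Sum>x\<in>?W. lbar (h (x \<circ> sref i)) * barH N x z) = (\<Sum>x\<in>?W. lbar (h x) * barH N (x \<circ> sref i) z)"
    by (rule sum.reindex_bij_witness[of _ "\<lambda>x. x \<circ> sref i" "\<lambda>x. x \<circ> sref i"])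
       (auto simp: comp_sref_in_Wgrp_iff[OF i])
  have "hbar N (mult_bs N h i) z = (\<Sum>x\<in>?W. lbar (h (x \<circ> sref i)) * barH N x z + ?c x * lbar (h x) * barH N x z)"
    unfolding hbar_def by (rule sum.cong) (simp_all add: lbar_mult_bs algebra_simps)
  also have "\<dots> = (\<Sum>x\<in>?W. lbar (h x) * barH N (x \<circ> sref i) z) + (\<Sum>x\<in>?W. ?c x * lbar (h x) * barH N x z)"
    by (simp add: sum.distrib reindex)
  also have "\<dots> = (\<Sum>x\<in>?W. lbar (h x) * mult_bs N (barH N x) i z)"
    by (simp add: sum.distrib mult_bs_barH[OF _ i] algebra_simps)
  also have "\<dots> = mult_bs N (hbar N h) i z"
    by (simp add: mult_bs_eq_mult_Hs mult_Hs_def hbar_def sum_distrib_left sum.distrib algebra_simps)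
  finally show "hbar N (mult_bs N h i) z = mult_bs N (hbar N h) i z" .
qed

lemma hbar_hadd:
  assumes "lpoly_coeffs f" "lpoly_coeffs g"
  shows "hbar N (hadd f g) = hadd (hbar N f) (hbar N g)"
  using assms by (auto simp: hbar_def hadd_def lpoly_coeffs_def lbar_add sum.distrib distrib_right)

lemma hbar_diff:
  assumes "lpoly_coeffs f" "lpoly_coeffs g"
  shows "hbar N (\<lambda>x. f x - g x) = (\<lambda>z. hbar N f z - hbar N g z)"
  using assms by (auto simp: hbar_def lpoly_coeffs_def lbar_diff sum_subtractf left_diff_distrib)

lemma hbar_zero: "hbar N (\<lambda>_. 0) = (\<lambda>_. 0)"
  by (simp add: hbar_def lbar_0)

lemma hbar_Hstd_id: "hbar N (Hstd id) = Hstd id"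
proof (rule ext)
  fix z
  have "hbar N (Hstd id) z = (\<Sum>x\<in>Wgrp N. if x = id then barH N id z else 0)"
    unfolding hbar_def by (rule sum.cong) (auto simp: Hstd_def lbar_0 lbar_1)
  then show "hbar N (Hstd id) z = Hstd id z" by (simp add: finite_Wgrp id_in_Wgrp barH_id)
qed

lemma mult_bar_word_Hstd_id_unitriangular:
  assumes "reduced N ws"
  shows "mult_bar_word N (Hstd id) ws (wordprod ws) = 1 \<and>
    (\<forall>z. mult_bar_word N (Hstd id) ws z \<noteq> 0 \<longrightarrow> z = wordprod ws \<or> len N z < length ws)"
  using assms
proof (induction ws rule: rev_induct)
  case Nil
  then show ?case by (simp add: Hstd_def)
next
  case (snoc i ws)
  let ?G = "mult_bar_word N (Hstd id) ws"
  let ?p = "wordprod ws"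
  have r: "reduced N ws" and l: "len N (?p \<circ> sref i) = Suc (len N ?p)"
    using reduced_snoc snoc.prems by blast+
  have i: "1 \<le> i" "i \<le> N" and k: "length ws = len N ?p"
    using snoc.prems r by (auto simp: reduced_def)
  have G_zero: "?G z = 0" if "length ws \<le> len N z" "z \<noteq> ?p" for z
    using snoc.IH[OF r] that by (meson leD)
  have "?p \<circ> sref i \<noteq> ?p" using l by (metis n_not_Suc_n)
  then have "?G (?p \<circ> sref i) = 0" using G_zero l k by simp
  then have diag: "mult_Hs_inv N ?G i (?p \<circ> sref i) = 1"
    using snoc.IH[OF r] by (simp add: mult_Hs_inv_apply mult_Hs_def id_def)
  have off_diag: "mult_Hs_inv N ?G i z = 0" if "z \<noteq> ?p \<circ> sref i" "Suc (length ws) \<le> len N z" for z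
  proof -
    have "z \<noteq> ?p" "length ws \<le> len N z" using that(2) k by auto
    moreover have "z \<circ> sref i \<noteq> ?p" "length ws \<le> len N (z \<circ> sref i)"
      using that comp_sref_eq_iff len_le_comp_sref[OF i, of z] by auto
    ultimately have "?G z = 0" "?G (z \<circ> sref i) = 0" using G_zero by auto
    then show ?thesis by (simp add: mult_Hs_inv_apply mult_Hs_def)
  qed
  show ?case
    using diag off_diag by (simp only: mult_bar_word_snoc wordprod_snoc length_append_singleton) (meson not_less)
qed

lemma barH_diag: "x \<in> Wgrp N \<Longrightarrow> barH N x x = 1"
  using mult_bar_word_Hstd_id_unitriangular[OF reduced_rword] rword_spec
  by (metis barH_eq_mult_bar_word)

lemma barH_nonzero_imp_len_less:
  "x \<in> Wgrp N \<Longrightarrow> barH N x z \<noteq> 0 \<Longrightarrow> z \<noteq> x \<Longrightarrow> len N z < len N x"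
  using mult_bar_word_Hstd_id_unitriangular[OF reduced_rword] rword_spec
  by (metis barH_eq_mult_bar_word)

definition is_kl :: "nat \<Rightarrow> perm \<Rightarrow> hecke \<Rightarrow> bool" where
  "is_kl N w b \<longleftrightarrow> (\<forall>x. x \<notin> Wgrp N \<longrightarrow> b x = 0) \<and> (\<forall>x. lpoly (b x)) \<and>
                    hbar N b = b \<and> b w = 1 \<and> (\<forall>x. x \<noteq> w \<longrightarrow> vZv (b x))"

text \<open>At an element \<open>x\<close> of maximal length in the support of \<open>d\<close>, triangularity of
  \<^const>\<open>barH\<close> gives \<^term>\<open>hbar N d x = lbar (d x)\<close>.\<close>

lemma hbar_fixed_vZv_eq_0:
  assumes supp: "supported N d" and v: "\<And>x. vZv (d x)" and fixed: "hbar N d = d"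
  shows "d = (\<lambda>_. 0)"
proof (rule ccontr)
  assume "d \<noteq> (\<lambda>_. 0)"
  define S where "S = {x \<in> Wgrp N. d x \<noteq> 0}"
  obtain x0 where "x0 \<in> S" using \<open>d \<noteq> (\<lambda>_. 0)\<close> supp by (auto simp: S_def supported_def)
  then have "\<exists>x. x \<in> S \<and> (\<forall>y. y \<in> S \<longrightarrow> len N y \<le> len N x)"
    using ex_has_greatest_nat[of "\<lambda>y. y \<in> S" x0 "len N" "Suc (Suc N * Suc N)"] len_le_square le_imp_less_Suc
    by blast
  then obtain x where xS: "x \<in> S" and max: "\<And>y. y \<in> S \<Longrightarrow> len N y \<le> len N x"
    by blast
  have xW: "x \<in> Wgrp N" using xS by (simp add: S_def)
  have "lbar (d y) * barH N y x = (if y = x then lbar (d x) else 0)" if "y \<in> Wgrp N" for y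
  proof (cases "y = x \<or> d y = 0")
    case True
    then show ?thesis using barH_diag[OF xW] by (auto simp: lbar_0)
  next
    case False
    then have "len N y \<le> len N x" using max that by (simp add: S_def)
    then have "barH N y x = 0" using barH_nonzero_imp_len_less[OF that] False by fastforce
    with False show ?thesis by simp
  qed
  then have "hbar N d x = lbar (d x)" using xW by (simp add: hbar_def finite_Wgrp)
  then have "d x = 0" using fixed vZv_lbar_fixed_eq_0[OF v] by metis
  with xS show False by (simp add: S_def)
qed

lemma kl_eqI:
  assumes b: "is_kl N w b"
  shows "kl N w = b"
  unfolding kl_def
proof (rule the_equality)
  show "(\<forall>x. x \<notin> Wgrp N \<longrightarrow> b x = 0) \<and> (\<forall>x. lpoly (b x)) \<and> hbar N b = b \<and> b w = 1 \<and> (\<forall>x. x \<noteq> w \<longrightarrow> vZv (b x))"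
    using b by (simp add: is_kl_def)
next
  fix b'
  assume "(\<forall>x. x \<notin> Wgrp N \<longrightarrow> b' x = 0) \<and> (\<forall>x. lpoly (b' x)) \<and> hbar N b' = b' \<and> b' w = 1 \<and> (\<forall>x. x \<noteq> w \<longrightarrow> vZv (b' x))"
  then have b': "is_kl N w b'" by (simp add: is_kl_def)
  let ?d = "\<lambda>x. b' x - b x"
  have "supported N ?d" using b b' by (simp add: is_kl_def supported_def)
  moreover have "vZv (?d x)" for x
    using b b' by (cases "x = w") (simp_all add: is_kl_def vZv_0 vZv_diff)
  moreover have "hbar N ?d = ?d"
    using b b' hbar_diff[of b' b N] by (simp add: is_kl_def lpoly_coeffs_def)
  ultimately have "?d = (\<lambda>_. 0)" by (rule hbar_fixed_vZv_eq_0)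
  then show "b' = b" by (simp add: fun_eq_iff)
qed

lemma mult_bs_Hstd_id_apply:
  assumes j: "1 \<le> j" "j \<le> N"
  shows "mult_bs N (Hstd id) j x = (if x = sref j then 1 else 0) + (if x = id then fls_X else 0)"
  using sref_ne_id[of j] len_sref[OF j] comp_sref_eq_iff[of x j id]
  by (auto simp: mult_bs_apply Hstd_def)

lemma kl_sref:
  assumes j: "1 \<le> j" "j \<le> N"
  shows "kl N (sref j) = mult_bs N (Hstd id) j"
proof (rule kl_eqI)
  have "supported N (mult_bs N (Hstd id) j)"
    using supported_mult_bs[OF supported_Hstd[OF id_in_Wgrp] j] .
  moreover have "lpoly_coeffs (mult_bs N (Hstd id) j)"
    using lpoly_coeffs_mult_bs[OF lpoly_coeffs_Hstd] .
  moreover have "hbar N (mult_bs N (Hstd id) j) = mult_bs N (Hstd id) j"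
    using hbar_mult_bs[OF lpoly_coeffs_Hstd j] hbar_Hstd_id by simp
  ultimately show "is_kl N (sref j) (mult_bs N (Hstd id) j)"
    using mult_bs_Hstd_id_apply[OF j] sref_ne_id[of j]
    by (auto simp: is_kl_def supported_def lpoly_coeffs_def fls_X_eq_vpow vZv_vpow vZv_0)
qed

lemma mult_H_id: "mult_H N h id = h"
  by (simp add: mult_H_def rword_id)

lemma mult_H_sref: "1 \<le> j \<Longrightarrow> j \<le> N \<Longrightarrow> mult_H N h (sref j) = mult_Hs N h j"
  by (simp add: mult_H_def rword_sref)

lemma mult_Hs_zero: "mult_Hs N (\<lambda>_. 0) i = (\<lambda>_. 0)"
  by (simp add: mult_Hs_def fun_eq_iff)

lemma mult_H_zero: "mult_H N (\<lambda>_. 0) y = (\<lambda>_. 0)"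
proof -
  have "fold (\<lambda>i g. mult_Hs N g i) ws (\<lambda>_. 0) = (\<lambda>_. 0)" for ws
    by (induction ws) (simp_all add: mult_Hs_zero)
  then show ?thesis by (simp add: mult_H_def)
qed

lemma hmult_kl_sref:
  assumes j: "1 \<le> j" "j \<le> N"
  shows "hmult N h (kl N (sref j)) = mult_bs N h j"
proof (rule ext)
  fix z
  have summand: "mult_H N (hscale (mult_bs N (Hstd id) j y) h) y z =
      (if y = sref j then mult_Hs N h j z else 0) + (if y = id then fls_X * h z else 0)" for y
    using sref_ne_id[of j] mult_H_sref[OF j] mult_H_id mult_H_zero
    by (auto simp: mult_bs_Hstd_id_apply[OF j] hscale_def)
  have "hmult N h (kl N (sref j)) z =
      (\<Sum>y\<in>Wgrp N. (if y = sref j then mult_Hs N h j z else 0) + (if y = id then fls_X * h z else 0))"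
    by (simp add: hmult_def kl_sref[OF j] summand)
  also have "\<dots> = mult_bs N h j z"
    by (simp add: sum.distrib finite_Wgrp id_in_Wgrp sref_in_Wgrp[OF j] mult_bs_eq_mult_Hs)
  finally show "hmult N h (kl N (sref j)) z = mult_bs N h j z" .
qed

section \<open>The permutations \<open>w\<^sub>I h\<^sub>X\<close>\<close>

text \<open>In one-line notation \<^term>\<open>wh k m\<close> is \<open>[k-1, \<dots>, k-m, k, k-m-1, \<dots>, 1]\<close> on \<open>{1..k}\<close>,
  i.e. \<open>w\<^sub>I h\<^sub>X\<close> in \<open>S\<^sub>k\<close> for \<open>X = {m+1..k-1}\<close> (see \<open>wI_comp_hsuf\<close>).\<close>

definition wh :: "nat \<Rightarrow> nat \<Rightarrow> perm" where
  "wh k m a = (if a < 1 \<or> k < a then a else if a \<le> m then k - a else if a = Suc m then k else Suc k - a)"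

definition wh_len :: "nat \<Rightarrow> nat \<Rightarrow> int" where
  "wh_len k m = int (k * (k - 1) div 2) - int m"

lemma wh_1_0: "wh (Suc 0) 0 = id"
  by (rule ext) (simp add: wh_def)

lemma wh_top: "2 \<le> k \<Longrightarrow> wh k (k - 1) = wh (k - 1) 0"
  by (rule ext) (auto simp: wh_def)

lemma wh_comp_sref:
  assumes "1 \<le> m" "m < k"
  shows "wh k m \<circ> sref m = wh k (m - 1)"
  using assms by (auto simp: fun_eq_iff wh_def sref_apply)

lemma wh_ascent: "1 \<le> m \<Longrightarrow> m < k \<Longrightarrow> wh k m m < wh k m (Suc m)"
  by (simp add: wh_def)

lemma wh_len_pred: "1 \<le> m \<Longrightarrow> wh_len k (m - 1) = wh_len k m + 1"
  by (simp add: wh_len_def of_nat_diff)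

lemma wh_len_Suc: "wh_len k (Suc m) = wh_len k m - 1"
  by (simp add: wh_len_def)

lemma wh_len_shift: "1 \<le> k \<Longrightarrow> wh_len k 0 = wh_len (Suc k) k"
proof -
  assume "1 \<le> k"
  then have "Suc k * (Suc k - 1) = k * (k - 1) + 2 * k" by (cases k) (auto simp: algebra_simps)
  then show ?thesis by (simp add: wh_len_def)
qed

lemma wh_in_Wgrp_len:
  assumes "1 \<le> k" "k \<le> Suc N" "m < k"
  shows "wh k m \<in> Wgrp N \<and> int (len N (wh k m)) = wh_len k m"
  using assms
proof (induction k arbitrary: m)
  case (Suc k)
  have top: "wh (Suc k) k \<in> Wgrp N \<and> int (len N (wh (Suc k) k)) = wh_len (Suc k) k"
  proof (cases "k = 0")
    case True
    then show ?thesis by (simp add: wh_1_0 id_in_Wgrp wh_len_def)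
  next
    case False
    then show ?thesis
      using Suc.IH[of 0] Suc.prems wh_top[of "Suc k"] wh_len_shift[of k] by simp
  qed
  have "m \<le> k" using Suc.prems by simp
  then show ?case
  proof (induction m rule: inc_induct)
    case (step n)
    have n: "1 \<le> Suc n" "Suc n < Suc k" "Suc n \<le> N" using step.hyps Suc.prems by auto
    have "wh (Suc k) (Suc n) \<circ> sref (Suc n) = wh (Suc k) n"
      using wh_comp_sref[OF n(1,2)] by simp
    moreover have "len N (wh (Suc k) (Suc n) \<circ> sref (Suc n)) = Suc (len N (wh (Suc k) (Suc n)))"
      by (rule len_comp_sref_ascent[OF n(1,3) wh_ascent[OF n(1,2)]])
    ultimately show ?case
      using step.IH Wgrp_comp[OF conjunct1[OF step.IH] sref_in_Wgrp[OF n(1,3)]]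
        wh_len_pred[OF n(1), of "Suc k"] by auto
  qed (use top in simp)
qed simp

lemma wh_Suc_in_Wgrp: "m \<le> N \<Longrightarrow> wh (Suc N) m \<in> Wgrp N"
  using wh_in_Wgrp_len[of "Suc N" N m] by simp

lemma len_wh_Suc: "m \<le> N \<Longrightarrow> int (len N (wh (Suc N) m)) = wh_len (Suc N) m"
  using wh_in_Wgrp_len[of "Suc N" N m] by simp

lemma parab_subset_Wgrp: "parab N \<subseteq> Wgrp (N - 1)"
  unfolding parab_def using wordprod_in_Wgrp by blast

lemma wh_reverses: "1 \<le> a \<Longrightarrow> a < b \<Longrightarrow> b \<le> N \<Longrightarrow> wh (Suc N) N b < wh (Suc N) N a"
  by (simp add: wh_def)

lemma inversions_subset_inversions_wh:
  assumes N: "1 \<le> N" and u: "u \<in> Wgrp (N - 1)"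
  shows "inversions N u \<subseteq> inversions N (wh (Suc N) N)"
proof
  fix r assume r: "r \<in> inversions N u"
  then obtain a b where ab: "r = (a, b)" "1 \<le> a" "a < b" "b \<le> Suc N" "u b < u a"
    by (auto simp: inversions_def)
  have SN: "Suc (N - 1) = N" using N by simp
  have "b \<le> N"
  proof (rule ccontr)
    assume "\<not> b \<le> N"
    then have "b = Suc N" using ab by simp
    then have "u b = Suc N" using Wgrp_apply_outside[OF u, of b] SN by simp
    moreover have "u a \<le> N" using Wgrp_apply_in[OF u, of a] ab \<open>b = Suc N\<close> SN by simp
    ultimately show False using ab by simp
  qed
  with ab show "r \<in> inversions N (wh (Suc N) N)" by (simp add: inversions_def wh_reverses)
qed

lemma Wgrp_reversing_eq_wh:
  assumes N: "1 \<le> N" and w: "w \<in> Wgrp (N - 1)"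
    and rev: "\<And>a b. 1 \<le> a \<Longrightarrow> a < b \<Longrightarrow> b \<le> N \<Longrightarrow> w b < w a"
  shows "w = wh (Suc N) N"
proof -
  let ?r = "wh (Suc N) N"
  have r: "?r \<in> Wgrp (N - 1)" using wh_in_Wgrp_len[of N "N - 1" 0] wh_top[of "Suc N"] N by simp
  have "inversions (N - 1) (w \<circ> ?r) = {}"
  proof -
    have "w (?r a) < w (?r b)" if "1 \<le> a" "a < b" "b \<le> N" for a b
      using that rev[of "?r b" "?r a"] by (simp add: wh_def)
    then show ?thesis using N by (fastforce simp: inversions_def)
  qed
  then have "w \<circ> ?r = id"
    using len_eq_0_imp_id[OF Wgrp_comp[OF w r]] by (simp add: len_eq_card_inversions)
  moreover have "?r \<circ> ?r = id" by (auto simp: fun_eq_iff wh_def)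
  ultimately show ?thesis by (metis comp_assoc comp_id)
qed

lemma wI_eq_wh:
  assumes N: "1 \<le> N"
  shows "wI N = wh (Suc N) N"
  unfolding wI_def
proof (rule the_equality)
  let ?r = "wh (Suc N) N"
  have "?r \<in> Wgrp (N - 1)" using wh_in_Wgrp_len[of N "N - 1" 0] wh_top[of "Suc N"] N by simp
  then obtain ws where "set ws \<subseteq> {1..N - 1}" "wordprod ws = ?r"
    using reduced_word_exists by blast
  then have "?r \<in> parab N" unfolding parab_def by (intro CollectI exI[of _ ws]) simp
  moreover have "len N u \<le> len N ?r" if "u \<in> parab N" for u
    using inversions_subset_inversions_wh[OF N] parab_subset_Wgrp that finite_inversions
    by (metis card_mono len_eq_card_inversions subsetD)
  ultimately show "?r \<in> parab N \<and> (\<forall>u\<in>parab N. len N u \<le> len N ?r)" by blast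
  fix w assume w: "w \<in> parab N \<and> (\<forall>u\<in>parab N. len N u \<le> len N w)"
  then have wW: "w \<in> Wgrp (N - 1)" using parab_subset_Wgrp by blast
  have sub: "inversions N w \<subseteq> inversions N ?r" by (rule inversions_subset_inversions_wh[OF N wW])
  have "len N ?r \<le> len N w" using w \<open>?r \<in> parab N\<close> by blast
  then have eq: "inversions N w = inversions N ?r"
    using sub finite_inversions by (metis card_seteq len_eq_card_inversions)
  have "w b < w a" if "1 \<le> a" "a < b" "b \<le> N" for a b
  proof -
    have "(a, b) \<in> inversions N ?r" using that by (simp add: inversions_def wh_reverses)
    then have "(a, b) \<in> inversions N w" using eq by simp
    then show ?thesis by (simp add: inversions_def)
  qed
  then show "w = ?r" by (rule Wgrp_reversing_eq_wh[OF N wW])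
qed

lemma hsuf_N: "hsuf N N = id"
  by (simp add: hsuf_def)

lemma hsuf_eq_comp_sref: "m < N \<Longrightarrow> hsuf N m = hsuf N (Suc m) \<circ> sref (Suc m)"
proof -
  assume "m < N"
  then have "[Suc m..<Suc N] = Suc m # [Suc (Suc m)..<Suc N]" by (simp add: upt_conv_Cons)
  then show ?thesis by (simp add: hsuf_def)
qed

lemma wI_comp_hsuf:
  assumes N: "1 \<le> N" and m: "m \<le> N"
  shows "wI N \<circ> hsuf N m = wh (Suc N) m"
  using m
proof (induction m rule: inc_induct)
  case base
  then show ?case using wI_eq_wh[OF N] by (simp add: hsuf_N)
next
  case (step m)
  then show ?case
    using hsuf_eq_comp_sref[of m N] wh_comp_sref[of "Suc m" "Suc N"] by (simp add: fun_eq_iff)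
qed

section \<open>The Bruhat interval below \<open>w\<^sub>I h\<^sub>X\<close>\<close>

text \<open>For \<open>k = Suc N\<close> this is the Bruhat interval below \<^term>\<open>wh k m\<close>, namely the \<open>y\<close>
  with \<open>y\<^sup>-\<^sup>1 k > m\<close> (\<open>bruhat_le_wh_iff\<close>). The same sets for smaller \<open>k\<close> live in
  \<open>S\<^sub>k\<close>; they are needed for the induction proving bar invariance of \<open>wh_sum\<close>.\<close>

definition wh_interval :: "nat \<Rightarrow> nat \<Rightarrow> nat \<Rightarrow> perm set" where
  "wh_interval N k m = {y \<in> Wgrp N. (\<forall>a. k < a \<longrightarrow> y a = a) \<and> (\<forall>a. 1 \<le> a \<and> a \<le> m \<longrightarrow> y a \<noteq> k)}"

lemma Wgrp_fixing_above_preimage: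
  assumes y: "y \<in> Wgrp N" and k: "1 \<le> k" "k \<le> Suc N" and above: "\<forall>a. k < a \<longrightarrow> y a = a"
  obtains p where "1 \<le> p" "p \<le> k" "y p = k"
proof -
  obtain p where p: "p \<in> {1..Suc N}" "y p = k" using Wgrp_preimage[OF y, of k] k by auto
  have "p \<le> k" using above p by (metis less_irrefl not_le_imp_less)
  with p that show ?thesis by auto
qed

lemma Wgrp_fixing_above_apply_le:
  assumes y: "y \<in> Wgrp N" and k: "k \<le> Suc N" and above: "\<forall>a. k < a \<longrightarrow> y a = a"
    and a: "1 \<le> a" "a \<le> k"
  shows "y a \<le> k"
proof (rule ccontr)
  assume "\<not> y a \<le> k"
  then have "y (y a) = y a" using above by simp
  then have "y a = a" using Wgrp_inj[OF y] by (metis injD)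
  with \<open>\<not> y a \<le> k\<close> a show False by simp
qed

definition bruhat_step :: "nat \<Rightarrow> (perm \<times> perm) set" where
  "bruhat_step N = {(y, y \<circ> Transposition.transpose i j) | y i j.
     y \<in> Wgrp N \<and> 1 \<le> i \<and> i < j \<and> j \<le> Suc N \<and> len N y < len N (y \<circ> Transposition.transpose i j)}"

lemma bruhat_le_iff_rtrancl: "bruhat_le N x w \<longleftrightarrow> x \<in> Wgrp N \<and> (x, w) \<in> (bruhat_step N)\<^sup>*"
  by (simp add: bruhat_le_def bruhat_step_def)

lemma mem_wh_interval_Suc_iff:
  "y \<in> wh_interval N (Suc N) m \<longleftrightarrow> y \<in> Wgrp N \<and> (\<forall>a. 1 \<le> a \<and> a \<le> m \<longrightarrow> y a \<noteq> Suc N)"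
  by (auto simp: wh_interval_def Wgrp_apply_outside)

lemma wh_mem_wh_interval: "m \<le> N \<Longrightarrow> wh (Suc N) m \<in> wh_interval N (Suc N) m"
  by (auto simp: mem_wh_interval_Suc_iff wh_Suc_in_Wgrp wh_def)

lemma wh_interval_bruhat_down:
  assumes "(y, w) \<in> (bruhat_step N)\<^sup>*" and w: "w \<in> wh_interval N (Suc N) m"
  shows "y \<in> wh_interval N (Suc N) m \<and> (y = w \<or> len N y < len N w)"
  using assms(1)
proof (induction rule: converse_rtrancl_induct)
  case base then show ?case using w by simp
next
  case (step y z)
  from step.hyps(1) obtain i j where z: "z = y \<circ> Transposition.transpose i j" and yW: "y \<in> Wgrp N"
    and ij: "1 \<le> i" "i < j" "j \<le> Suc N" and l: "len N y < len N z"
    unfolding bruhat_step_def by blast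
  have zI: "z \<in> wh_interval N (Suc N) m" and lz: "len N z \<le> len N w"
    using step.IH by auto
  have "y a \<noteq> Suc N" if a: "1 \<le> a" "a \<le> m" for a
  proof
    assume ya: "y a = Suc N"
    consider "a = i" | "a = j" | "a \<noteq> i" "a \<noteq> j" by blast
    then show False
    proof cases
      case 1
      have "y j \<noteq> Suc N" using ya 1 ij Wgrp_inj[OF yW] by (metis injD less_irrefl)
      moreover have "y j \<le> Suc N" using Wgrp_apply_in[OF yW, of j] ij by simp
      ultimately have "len N z < len N y"
        using ya 1 z len_comp_transpose_descent[OF ij] by simp
      with l show False by simp
    next
      case 2
      then have "z i = Suc N" "1 \<le> i \<and> i \<le> m" using z ya ij a by simp_all
      then show False using zI unfolding mem_wh_interval_Suc_iff by blast
    next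
      case 3
      then have "z a = Suc N" using z ya by simp
      then show False using zI a unfolding mem_wh_interval_Suc_iff by blast
    qed
  qed
  with yW l lz show ?case by (simp add: mem_wh_interval_Suc_iff)
qed

text \<open>If \<open>y\<close> agrees with \<^term>\<open>wh (Suc N) m\<close> before position \<open>k\<close>, then no value above
  \<^term>\<open>wh (Suc N) m k\<close> is left for \<open>y k\<close>.\<close>

lemma wh_larger_value_earlier:
  assumes k: "1 \<le> k" "k \<le> Suc N" and m: "m \<le> N"
    and v: "wh (Suc N) m k < v" "v \<le> Suc N" and top: "k \<le> m \<longrightarrow> v \<noteq> Suc N"
  shows "\<exists>a. 1 \<le> a \<and> a < k \<and> wh (Suc N) m a = v"
proof -
  consider (before) "k \<le> m" | (at) "k = Suc m" | (after) "Suc m < k" by linarith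
  then show ?thesis
  proof cases
    case before
    with k v top show ?thesis by (intro exI[of _ "Suc N - v"]) (auto simp: wh_def)
  next
    case at
    with k v show ?thesis by (simp add: wh_def)
  next
    case after
    consider (top) "v = Suc N" | (high) "Suc N - m \<le> v" "v \<noteq> Suc N" | (low) "v < Suc N - m"
      by linarith
    then show ?thesis
    proof cases
      case top
      with after m show ?thesis by (intro exI[of _ "Suc m"]) (simp add: wh_def)
    next
      case high
      with after v show ?thesis by (intro exI[of _ "Suc N - v"]) (auto simp: wh_def)
    next
      case low
      with after k v show ?thesis by (intro exI[of _ "Suc (Suc N) - v"]) (auto simp: wh_def)
    qed
  qed
qed

text \<open>Swap the first position \<open>k\<close> where \<open>y\<close> differs from \<^term>\<open>wh (Suc N) m\<close> with the
  position where \<open>y\<close> takes the value \<^term>\<open>wh (Suc N) m k\<close>.\<close>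

lemma wh_interval_bruhat_step_up:
  assumes m: "m \<le> N" and yI: "y \<in> wh_interval N (Suc N) m" and ne: "y \<noteq> wh (Suc N) m"
  obtains y' where "(y, y') \<in> bruhat_step N" "y' \<in> wh_interval N (Suc N) m"
proof -
  let ?w = "wh (Suc N) m"
  have y: "y \<in> Wgrp N" and yt: "\<And>a. 1 \<le> a \<Longrightarrow> a \<le> m \<Longrightarrow> y a \<noteq> Suc N"
    using yI by (auto simp: mem_wh_interval_Suc_iff)
  have wW: "?w \<in> Wgrp N" by (rule wh_Suc_in_Wgrp[OF m])
  have ex: "\<exists>k. y k \<noteq> ?w k" using ne by (auto simp: fun_eq_iff)
  define k where "k = (LEAST k. y k \<noteq> ?w k)"
  have yk: "y k \<noteq> ?w k" unfolding k_def by (rule LeastI_ex[OF ex])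
  have below: "\<And>a. a < k \<Longrightarrow> y a = ?w a" unfolding k_def using not_less_Least by blast
  have k: "1 \<le> k" "k \<le> Suc N"
    using yk Wgrp_apply_outside[OF y, of k] by (auto simp: wh_def split: if_splits)
  have lt: "y k < ?w k"
  proof (rule ccontr)
    assume "\<not> y k < ?w k"
    then have "?w k < y k" using yk by simp
    moreover have "y k \<le> Suc N" using Wgrp_apply_in[OF y, of k] k by simp
    ultimately obtain a where "1 \<le> a" "a < k" "?w a = y k"
      using wh_larger_value_earlier[OF k m] yt k by blast
    then show False using below Wgrp_inj[OF y] by (metis injD less_irrefl)
  qed
  obtain j where j: "j \<in> {1..Suc N}" "y j = ?w k"
    using Wgrp_preimage[OF y Wgrp_apply_in[OF wW]] k by auto
  have "j \<noteq> k" using j yk by auto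
  moreover have "\<not> j < k" using below j Wgrp_inj[OF wW] \<open>j \<noteq> k\<close> by (metis injD)
  ultimately have jk: "k < j" by simp
  let ?y = "y \<circ> Transposition.transpose k j"
  have step: "(y, ?y) \<in> bruhat_step N"
    using y k jk j lt len_comp_transpose_ascent[of k j N y] unfolding bruhat_step_def by auto
  have "?y \<in> wh_interval N (Suc N) m"
    unfolding mem_wh_interval_Suc_iff
  proof (intro conjI allI impI)
    show "?y \<in> Wgrp N" using Wgrp_comp[OF y transpose_in_Wgrp] k j by auto
    fix a assume a: "1 \<le> a \<and> a \<le> m"
    then have "?w k \<noteq> Suc N" if "a = k" using that k by (simp add: wh_def)
    with a jk j yt k show "?y a \<noteq> Suc N"
      by (auto simp: Transposition.transpose_def)
  qed
  with step show ?thesis by (rule that)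
qed

lemma wh_interval_bruhat_up:
  assumes m: "m \<le> N" and yI: "y \<in> wh_interval N (Suc N) m"
  shows "(y, wh (Suc N) m) \<in> (bruhat_step N)\<^sup>*"
  using yI
proof (induction "Suc N * Suc N - len N y" arbitrary: y rule: less_induct)
  case less
  show ?case
  proof (cases "y = wh (Suc N) m")
    case False
    then obtain y' where step: "(y, y') \<in> bruhat_step N" and y': "y' \<in> wh_interval N (Suc N) m"
      using wh_interval_bruhat_step_up[OF m less.prems] by blast
    have "len N y < len N y'" using step by (auto simp: bruhat_step_def)
    then have "Suc N * Suc N - len N y' < Suc N * Suc N - len N y"
      using len_le_square[of N y'] by simp
    with less.hyps y' step show ?thesis by (meson converse_rtrancl_into_rtrancl)
  qed simp
qed

lemma bruhat_le_wh_iff: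
  assumes m: "m \<le> N"
  shows "bruhat_le N y (wh (Suc N) m) \<longleftrightarrow> y \<in> wh_interval N (Suc N) m"
proof
  assume "bruhat_le N y (wh (Suc N) m)"
  then have "(y, wh (Suc N) m) \<in> (bruhat_step N)\<^sup>*" by (simp add: bruhat_le_iff_rtrancl)
  from wh_interval_bruhat_down[OF this wh_mem_wh_interval[OF m]]
  show "y \<in> wh_interval N (Suc N) m" ..
next
  assume y: "y \<in> wh_interval N (Suc N) m"
  then have "y \<in> Wgrp N" by (simp add: mem_wh_interval_Suc_iff)
  with wh_interval_bruhat_up[OF m y] show "bruhat_le N y (wh (Suc N) m)"
    by (simp add: bruhat_le_iff_rtrancl)
qed

lemma bruhat_le_wh_imp_len_le:
  assumes m: "m \<le> N" and le: "bruhat_le N y (wh (Suc N) m)"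
  shows "y = wh (Suc N) m \<or> len N y < len N (wh (Suc N) m)"
proof -
  have "(y, wh (Suc N) m) \<in> (bruhat_step N)\<^sup>*" using le by (simp add: bruhat_le_iff_rtrancl)
  from wh_interval_bruhat_down[OF this wh_mem_wh_interval[OF m]] show ?thesis ..
qed

section \<open>The Kazhdan--Lusztig elements of \<open>w\<^sub>I h\<^sub>X\<close>\<close>

definition wh_sum :: "nat \<Rightarrow> nat \<Rightarrow> nat \<Rightarrow> hecke" where
  "wh_sum N k m = (\<lambda>y. if y \<in> wh_interval N k m then vpow (wh_len k m - int (len N y)) else 0)"

lemma wh_sum_apply:
  assumes y: "y \<in> Wgrp N" and above: "\<forall>a. k < a \<longrightarrow> y a = a" and p: "1 \<le> p" "y p = k"
  shows "wh_sum N k m y = (if m < p then vpow (wh_len k m - int (len N y)) else 0)"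
proof -
  have "(\<forall>a. 1 \<le> a \<and> a \<le> m \<longrightarrow> y a \<noteq> k) \<longleftrightarrow> m < p"
  proof
    assume "\<forall>a. 1 \<le> a \<and> a \<le> m \<longrightarrow> y a \<noteq> k"
    then show "m < p" using p by (metis not_le_imp_less)
  next
    assume "m < p"
    then show "\<forall>a. 1 \<le> a \<and> a \<le> m \<longrightarrow> y a \<noteq> k"
      using p Wgrp_inj[OF y] by (metis injD leD)
  qed
  then show ?thesis using y above by (simp add: wh_sum_def wh_interval_def)
qed

lemma supported_wh_sum: "supported N (wh_sum N k m)"
  by (simp add: supported_def wh_sum_def wh_interval_def)

lemma lpoly_coeffs_wh_sum: "lpoly_coeffs (wh_sum N k m)"
  by (simp add: lpoly_coeffs_def wh_sum_def lpoly_vpow lpoly_0)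

lemma wh_sum_mult_bs_grow_apply:
  assumes m: "1 \<le> m" "m < k" and k: "k \<le> Suc N"
    and z: "z \<in> Wgrp N" and above: "\<forall>a. k < a \<longrightarrow> z a = a"
  shows "mult_bs N (wh_sum N k m) m z = wh_sum N k (m - 1) z + wh_sum N k (Suc m) z"
proof -
  let ?s = "sref m" and ?L = "wh_len k m" and ?l = "int (len N z)"
  have mN: "m \<le> N" using m k by simp
  obtain p where p: "1 \<le> p" "p \<le> k" "z p = k"
    using Wgrp_fixing_above_preimage[OF z _ k above] m by auto
  have zs: "z \<circ> ?s \<in> Wgrp N" "\<forall>a. k < a \<longrightarrow> (z \<circ> ?s) a = a" "1 \<le> ?s p" "(z \<circ> ?s) (?s p) = k"
    using Wgrp_comp[OF z sref_in_Wgrp[OF m(1) mN]] above m p by (auto simp: sref_apply)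
  note val = wh_sum_apply[OF z above p(1,3)] and val_s = wh_sum_apply[OF zs]
  note len = Wgrp_len_comp_sref_cases[OF z m(1) mN]
  have pred: "wh_len k (m - Suc 0) = wh_len k m + 1" using wh_len_pred[OF m(1)] by simp
  have less_k: "z a < k" if "1 \<le> a" "a \<le> k" "a \<noteq> p" for a
    using that p Wgrp_fixing_above_apply_le[OF z k above] Wgrp_inj[OF z] by (metis injD le_neq_implies_less)
  consider "Suc m < p" | "p = Suc m" | "p = m" | "p < m" by linarith
  then show ?thesis
  proof cases
    case 1
    then have "?s p = p" by (simp add: sref_apply)
    with 1 len show ?thesis
      by (auto simp: mult_bs_apply val val_s pred wh_len_Suc fls_X_mult_vpow algebra_simps)
  next
    case 2
    then have "z m < z (Suc m)" using less_k[of m] p m by simp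
    with 2 len show ?thesis
      by (auto simp: mult_bs_apply val val_s sref_apply pred fls_X_mult_vpow algebra_simps)
  next
    case 3
    then have "z (Suc m) < z m" using less_k[of "Suc m"] p m by simp
    with 3 len m show ?thesis
      by (auto simp: mult_bs_apply val val_s sref_apply pred algebra_simps)
  next
    case 4
    then show ?thesis by (simp add: mult_bs_apply val val_s sref_apply)
  qed
qed

lemma wh_sum_mult_bs_grow:
  assumes m: "1 \<le> m" "m < k" and k: "k \<le> Suc N"
  shows "mult_bs N (wh_sum N k m) m = hadd (wh_sum N k (m - 1)) (wh_sum N k (Suc m))"
proof (rule ext)
  fix z
  show "mult_bs N (wh_sum N k m) m z = hadd (wh_sum N k (m - 1)) (wh_sum N k (Suc m)) z"
  proof (cases "z \<in> Wgrp N \<and> (\<forall>a. k < a \<longrightarrow> z a = a)")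
    case True
    then show ?thesis using wh_sum_mult_bs_grow_apply[OF m k] by (simp add: hadd_def)
  next
    case False
    have "m \<le> N" using m k by simp
    then have "z \<circ> sref m \<notin> wh_interval N k m"
      using False comp_sref_in_Wgrp_iff[OF m(1)] m by (auto simp: wh_interval_def sref_apply)
    moreover have "z \<notin> wh_interval N k m'" for m' using False by (simp add: wh_interval_def)
    ultimately show ?thesis by (simp add: mult_bs_apply wh_sum_def hadd_def)
  qed
qed

lemma wh_sum_mult_bs_descent:
  assumes m: "m \<le> N" and j: "1 \<le> j" "j \<le> N" "j \<noteq> m"
  shows "mult_bs N (wh_sum N (Suc N) m) j = hscale (fls_X + fls_X_inv) (wh_sum N (Suc N) m)"
proof (rule ext)
  fix z
  show "mult_bs N (wh_sum N (Suc N) m) j z = hscale (fls_X + fls_X_inv) (wh_sum N (Suc N) m) z"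
  proof (cases "z \<in> Wgrp N")
    case False
    then have "z \<circ> sref j \<notin> Wgrp N" using comp_sref_in_Wgrp_iff[OF j(1,2)] by blast
    with False show ?thesis by (simp add: mult_bs_apply wh_sum_def wh_interval_def hscale_def)
  next
    case z: True
    have above: "\<forall>a. Suc N < a \<longrightarrow> z a = a" using Wgrp_apply_outside[OF z] by auto
    obtain p where p: "1 \<le> p" "p \<le> Suc N" "z p = Suc N"
      using Wgrp_fixing_above_preimage[OF z _ _ above] by auto
    have zs: "z \<circ> sref j \<in> Wgrp N" "\<forall>a. Suc N < a \<longrightarrow> (z \<circ> sref j) a = a"
        "1 \<le> sref j p" "(z \<circ> sref j) (sref j p) = Suc N"
      using Wgrp_comp[OF z sref_in_Wgrp[OF j(1,2)]] above p j by (auto simp: sref_apply)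
    note val = wh_sum_apply[OF z above p(1,3)] and val_s = wh_sum_apply[OF zs, unfolded o_def]
    have "m < sref j p \<longleftrightarrow> m < p" using j(3) by (auto simp: sref_apply)
    with Wgrp_len_comp_sref_cases[OF z j(1,2)] show ?thesis
      by (auto simp: mult_bs_apply hscale_def val val_s fls_X_mult_vpow algebra_simps o_def)
  qed
qed

lemma wh_sum_diag:
  assumes "1 \<le> k" "k \<le> Suc N"
  shows "wh_sum N k k = (\<lambda>_. 0)"
proof -
  have "y \<notin> wh_interval N k k" for y
    using Wgrp_fixing_above_preimage[OF _ assms] by (force simp: wh_interval_def)
  then show ?thesis by (simp add: wh_sum_def)
qed

lemma wh_sum_1_0: "wh_sum N (Suc 0) 0 = Hstd id"
proof -
  have "y \<in> wh_interval N (Suc 0) 0 \<longleftrightarrow> y = id" for y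
  proof
    assume y: "y \<in> wh_interval N (Suc 0) 0"
    then have yW: "y \<in> Wgrp N" and above: "\<forall>a. 1 < a \<longrightarrow> y a = a" by (auto simp: wh_interval_def)
    obtain p where "1 \<le> p" "p \<le> 1" "y p = 1" using Wgrp_fixing_above_preimage[OF yW _ _ above] by auto
    then have "y 1 = 1" by simp
    moreover have "y 0 = 0" using Wgrp_apply_outside[OF yW, of 0] by simp
    ultimately show "y = id" using above by (metis eq_id_iff less_one linorder_neqE_nat)
  qed (simp add: wh_interval_def id_in_Wgrp)
  then have "wh_sum N (Suc 0) 0 y = Hstd id y" for y
    by (cases "y = id") (simp_all add: wh_sum_def Hstd_def wh_len_def vpow_0)
  then show ?thesis by blast
qed

lemma wh_sum_shift:
  assumes k: "1 \<le> k" "k \<le> N"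
  shows "wh_sum N k 0 = wh_sum N (Suc k) k"
proof -
  have "wh_interval N k 0 = wh_interval N (Suc k) k"
  proof (intro set_eqI iffI)
    fix y assume "y \<in> wh_interval N k 0"
    then have yW: "y \<in> Wgrp N" and above: "\<forall>a. k < a \<longrightarrow> y a = a"
      by (auto simp: wh_interval_def)
    have "y a \<noteq> Suc k" if "a \<le> k" for a
    proof
      assume "y a = Suc k"
      then have "y a = y (Suc k)" using above by simp
      then have "a = Suc k" by (rule injD[OF Wgrp_inj[OF yW]])
      with that show False by simp
    qed
    with yW above show "y \<in> wh_interval N (Suc k) k" by (simp add: wh_interval_def)
  next
    fix y assume y: "y \<in> wh_interval N (Suc k) k"
    then have yW: "y \<in> Wgrp N" and above: "\<forall>a. Suc k < a \<longrightarrow> y a = a"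
      and avoid: "\<forall>a. 1 \<le> a \<and> a \<le> k \<longrightarrow> y a \<noteq> Suc k" by (auto simp: wh_interval_def)
    obtain p where "1 \<le> p" "p \<le> Suc k" "y p = Suc k"
      using Wgrp_fixing_above_preimage[OF yW _ _ above] k by auto
    with avoid have "y (Suc k) = Suc k" by (metis le_SucE)
    with above have "\<forall>a. k < a \<longrightarrow> y a = a" by (metis Suc_lessI)
    with yW show "y \<in> wh_interval N k 0" by (simp add: wh_interval_def)
  qed
  moreover have "wh_len k 0 = wh_len (Suc k) k" by (rule wh_len_shift[OF k(1)])
  ultimately show ?thesis unfolding wh_sum_def by (simp only:)
qed

lemma nat_dec_two_step_induct:
  assumes "m \<le> k" "P k" "P (k - 1)"
    and step: "\<And>n. 1 \<le> n \<Longrightarrow> n < k \<Longrightarrow> P n \<Longrightarrow> P (Suc n) \<Longrightarrow> P (n - 1)"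
  shows "P m"
proof -
  have two: "P (k - d) \<and> P (k - Suc d)" if "d < k" for d
    using that
  proof (induction d)
    case (Suc d)
    then have IH: "P (k - d)" "P (k - Suc d)" by simp_all
    have "Suc (k - Suc d) = k - d" using Suc.prems by simp
    then have "P (Suc (k - Suc d))" using IH(1) by (simp only:)
    from step[OF _ _ IH(2) this] Suc.prems have "P (k - Suc d - 1)" by simp
    moreover have "k - Suc (Suc d) = k - Suc d - 1" by simp
    ultimately show ?case using IH(2) by (simp only:)
  qed (use assms in simp)
  show ?thesis
  proof (cases "m = k")
    case False
    with assms(1) have "k - Suc m < k" "k - Suc (k - Suc m) = m" by auto
    with two show ?thesis by metis
  qed (use assms in simp)
qed

lemma hbar_wh_sum:
  "1 \<le> k \<Longrightarrow> k \<le> Suc N \<Longrightarrow> m \<le> k \<Longrightarrow> hbar N (wh_sum N k m) = wh_sum N k m"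
proof (induction k arbitrary: m)
  case (Suc k)
  show ?case
  proof (rule nat_dec_two_step_induct[where P = "\<lambda>m. hbar N (wh_sum N (Suc k) m) = wh_sum N (Suc k) m"])
    show "hbar N (wh_sum N (Suc k) (Suc k)) = wh_sum N (Suc k) (Suc k)"
      using wh_sum_diag[of "Suc k" N] Suc.prems hbar_zero by simp
    show "hbar N (wh_sum N (Suc k) (Suc k - 1)) = wh_sum N (Suc k) (Suc k - 1)"
      using wh_sum_1_0 hbar_Hstd_id Suc.IH[of 0] wh_sum_shift[of k N] Suc.prems by (cases "k = 0") auto
  next
    fix n assume n: "1 \<le> n" "n < Suc k"
      and IH: "hbar N (wh_sum N (Suc k) n) = wh_sum N (Suc k) n"
        "hbar N (wh_sum N (Suc k) (Suc n)) = wh_sum N (Suc k) (Suc n)"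
    have "n \<le> N" using n Suc.prems by simp
    have grow: "mult_bs N (wh_sum N (Suc k) n) n = hadd (wh_sum N (Suc k) (n - 1)) (wh_sum N (Suc k) (Suc n))"
      by (rule wh_sum_mult_bs_grow[OF n Suc.prems(2)])
    have "hadd (hbar N (wh_sum N (Suc k) (n - 1))) (wh_sum N (Suc k) (Suc n))
        = hbar N (hadd (wh_sum N (Suc k) (n - 1)) (wh_sum N (Suc k) (Suc n)))"
      using hbar_hadd[OF lpoly_coeffs_wh_sum lpoly_coeffs_wh_sum] IH(2) by simp
    also have "\<dots> = hbar N (mult_bs N (wh_sum N (Suc k) n) n)" by (simp only: grow)
    also have "\<dots> = mult_bs N (hbar N (wh_sum N (Suc k) n)) n"
      by (rule hbar_mult_bs[OF lpoly_coeffs_wh_sum n(1) \<open>n \<le> N\<close>])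
    also have "\<dots> = hadd (wh_sum N (Suc k) (n - 1)) (wh_sum N (Suc k) (Suc n))" by (simp only: IH(1) grow)
    finally show "hbar N (wh_sum N (Suc k) (n - 1)) = wh_sum N (Suc k) (n - 1)"
      by (simp add: hadd_def fun_eq_iff)
  qed (use Suc.prems in simp)
qed simp

lemma kl_wh:
  assumes m: "m \<le> N"
  shows "kl N (wh (Suc N) m) = wh_sum N (Suc N) m"
proof (rule kl_eqI)
  let ?w = "wh (Suc N) m"
  have "wh_sum N (Suc N) m ?w = 1"
    using wh_mem_wh_interval[OF m] len_wh_Suc[OF m] by (simp add: wh_sum_def vpow_0)
  moreover have "vZv (wh_sum N (Suc N) m x)" if "x \<noteq> ?w" for x
  proof (cases "x \<in> wh_interval N (Suc N) m")
    case True
    then have "len N x < len N ?w"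
      using bruhat_le_wh_imp_len_le[OF m] bruhat_le_wh_iff[OF m] that by blast
    then show ?thesis using True len_wh_Suc[OF m] by (simp add: wh_sum_def vZv_vpow)
  qed (simp add: wh_sum_def vZv_0)
  ultimately show "is_kl N ?w (wh_sum N (Suc N) m)"
    using supported_wh_sum lpoly_coeffs_wh_sum hbar_wh_sum[of "Suc N" N m] m
    by (simp add: is_kl_def supported_def lpoly_coeffs_def)
qed

lemma smooth_wh:
  assumes m: "m \<le> N"
  shows "smooth N (wh (Suc N) m)"
proof -
  let ?w = "wh (Suc N) m"
  have "wh_sum N (Suc N) m y = (if bruhat_le N y ?w then fls_X ^ (len N ?w - len N y) else 0)" for y
  proof (cases "y \<in> wh_interval N (Suc N) m")
    case True
    then have "len N y \<le> len N ?w" using bruhat_le_wh_imp_len_le[OF m] bruhat_le_wh_iff[OF m] by fastforce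
    then have "int (len N ?w - len N y) = wh_len (Suc N) m - int (len N y)"
      using len_wh_Suc[OF m] by (simp add: of_nat_diff)
    with True show ?thesis using bruhat_le_wh_iff[OF m] by (simp add: wh_sum_def fls_X_power_eq_vpow)
  next
    case False
    then show ?thesis using bruhat_le_wh_iff[OF m] by (simp add: wh_sum_def)
  qed
  then show ?thesis unfolding smooth_def kl_wh[OF m] by auto
qed

theorem lemma11p4:
  fixes N m :: nat
  assumes "1 \<le> N" and "m \<le> N"
  shows "(m < N \<and> 1 \<le> m \<longrightarrow>
            hmult N (kl N (wI N \<circ> hsuf N m)) (kl N (sref m)) =
            hadd (kl N (wI N \<circ> hsuf N (m - 1))) (kl N (wI N \<circ> hsuf N (m + 1))))
       \<and> (m = N \<longrightarrow> hmult N (kl N (wI N)) (kl N (sref N)) = kl N (wI N \<circ> sref N))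
       \<and> (\<forall>j\<in>{1..N}. (if m < N then j \<noteq> m else j \<noteq> N) \<longrightarrow>
            hmult N (kl N (wI N \<circ> hsuf N m)) (kl N (sref j)) =
            hscale (fls_X + fls_X_inv) (kl N (wI N \<circ> hsuf N m)))
       \<and> smooth N (wI N \<circ> hsuf N m)"
proof -
  note N = assms(1)
  have kl_eq: "kl N (wI N \<circ> hsuf N n) = wh_sum N (Suc N) n" if "n \<le> N" for n
    using that by (simp add: wI_comp_hsuf[OF N] kl_wh)
  have grow: "hmult N (kl N (wI N \<circ> hsuf N m)) (kl N (sref m)) =
      hadd (kl N (wI N \<circ> hsuf N (m - 1))) (kl N (wI N \<circ> hsuf N (m + 1)))" if "m < N" "1 \<le> m"
    using that kl_eq hmult_kl_sref wh_sum_mult_bs_grow[of m "Suc N" N] by simp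
  have "kl N (wI N) = wh_sum N (Suc N) N" using kl_eq[of N] by (simp add: hsuf_N)
  moreover have "kl N (wI N \<circ> sref N) = wh_sum N (Suc N) (N - 1)"
    using kl_eq[of "N - 1"] hsuf_eq_comp_sref[of "N - 1" N] N by (simp add: hsuf_N)
  ultimately have top: "hmult N (kl N (wI N)) (kl N (sref N)) = kl N (wI N \<circ> sref N)"
    using hmult_kl_sref[of N N] wh_sum_mult_bs_grow[of N "Suc N" N] wh_sum_diag[of "Suc N" N] N
    by (simp add: hadd_def)
  have descent: "hmult N (kl N (wI N \<circ> hsuf N m)) (kl N (sref j)) =
      hscale (fls_X + fls_X_inv) (kl N (wI N \<circ> hsuf N m))" if "j \<in> {1..N}" "j \<noteq> m" for j
    using that assms kl_eq hmult_kl_sref wh_sum_mult_bs_descent by simp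
  have "smooth N (wI N \<circ> hsuf N m)" using assms smooth_wh by (simp add: wI_comp_hsuf)
  with grow top descent assms show ?thesis by auto
qed

end
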